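(* Let $R$ be a reflexive relation on a set $U$ such that $\mathrm{DM(RS)}$ is completely distributive and spatial. The following are equivalent: (i) $\mathrm{DM(RS)}$ forms a Nelson algebra (with the operations described in the context); (ii) for all $x,y\in U\setminus\mathcal S$ such that $\{x\}^{\blacktriangle}$ and $\{y\}^{\blacktriangle}$ are completely join-irreducible in $\wp(U)^{\blacktriangle}$: if $\{x\}^{\blacktriangle},\{y\}^{\blacktriangle}\subseteq\{u\}^{\blacktriangle}$ for some $u\in U$, then there exists $z\in U$ such that $\{z\}^{\blacktriangle}$ is completely join-irreducible in $\wp(U)^{\blacktriangle}$ and $\{x\}^{\blacktriangle},\{y\}^{\blacktriangle}\subseteq\{z\}^{\blacktriangle}$.
   Context: Let $U$ be a set and $R\subseteq U\times U$ a binary relation. For $x\in U$, $R(x)=\{y\in U\mid (x,y)\in R\}$ and $\breve R(x)=\{y\in U\mid (y,x)\in R\}$ ($\breve R$ is the inverse relation). For $X\subseteq U$: $X^{\blacktriangledown}=\{x\in U\mid R(x)\subseteq X\}$, $X^{\blacktriangle}=\{x\in U\mid R(x)\cap X\neq\emptyset\}$, $X^{\triangledown}=\{x\in U\mid \breve R(x)\subseteq X\}$, $X^{\vartriangle}=\{x\in U\mid \breve R(x)\cap X\neq\emptyset\}$; thus $\{x\}^{\vartriangle}=R(x)$ and $\{x\}^{\blacktriangle}=\breve R(x)$, and composites such as $X^{\vartriangle\blacktriangledown}$ mean $(X^{\vartriangle})^{\blacktriangledown}$. Put $\wp(U)^{\blacktriangledown}=\{X^{\blacktriangledown}\mid X\subseteq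 U\}$ and similarly $\wp(U)^{\blacktriangle},\wp(U)^{\triangledown},\wp(U)^{\vartriangle}$; each is a complete lattice under $\subseteq$ (in $\wp(U)^{\blacktriangle}$ and $\wp(U)^{\vartriangle}$ joins are unions). The set of singletons is $\mathcal S=\{x\in U\mid |R(x)|=1\}$. $\mathrm{RS}=\{(X^{\blacktriangledown},X^{\blacktriangle})\mid X\subseteq U\}$ is ordered coordinatewise by inclusion, and $\mathrm{DM(RS)}$ is its Dedekind–MacNeille completion, which is (identified with) $\{(A,B)\in\wp(U)^{\blacktriangledown}\times\wp(U)^{\blacktriangle}\mid A^{\vartriangle\blacktriangle}\subseteq B,\ A\cap\mathcal S=B\cap\mathcal S\}$ ordered coordinatewise, with arbitrary meets $\bigwedge_i(X_i,Y_i)=(\bigcap_iX_i,(\bigcap_iY_i)^{\triangledown\blacktriangle})$ and joins $\bigvee_i(X_i,Y_i)=((\bigcup_iX_i)^{\vartriangle\blacktriangledown},\bigcup_iY_i)$. An element $j$ of a complete lattice $L$ is completely join-irreducible if $j=\bigvee S$ implies $j\in S$ for all $S\subseteq L$ (the least element is not completely join-irreducible). $L$ is spatial if each element is the join of the completely join-irreducible elements below it. For reflexive $R$ with $\mathrm{DM(RS)}$ distributive, $\mathrm{DM(RS)}$ is a Kleene algebra with $\sim(A,B)=(B^c,A^c)$ ($^c$ = complement in $U$), bottom $(\emptyset,\emptyset)$ and top $(U,U)$. A Kleene algebra is a bounded distributive lattice with an operation $\sim$ satisfying $\sim\sim x=x$, $\sim(x\vee y)=\sim x\wedge\sim y$,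 $\sim(x\wedge y)=\sim x\vee\sim y$ and $x\wedge\sim x\le y\vee\sim y$. A Nelson algebra is a Kleene algebra in which for all $a,b$ the element $a\to b:=a\Rightarrow(\sim a\vee b)$ exists ($\Rightarrow$ the relative pseudocomplement: $a\Rightarrow c$ is the greatest $x$ with $a\wedge x\le c$) and $(a\wedge b)\to c=a\to(b\to c)$ for all $a,b,c$. "$\mathrm{DM(RS)}$ forms a Nelson algebra" means that the Kleene algebra $(\mathrm{DM(RS)},\vee,\wedge,\sim,(\emptyset,\emptyset),(U,U))$ with this $\to$ is a Nelson algebra. *)

theory Defs
  imports Main
begin

definition is_lub :: "'b set \<Rightarrow> ('b \<Rightarrow> 'b \<Rightarrow> bool) \<Rightarrow> 'b set \<Rightarrow> 'b \<Rightarrow> bool" where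
  "is_lub L le A x \<longleftrightarrow> x \<in> L \<and> (\<forall>a\<in>A. le a x) \<and> (\<forall>y\<in>L. (\<forall>a\<in>A. le a y) \<longrightarrow> le x y)"

definition is_glb :: "'b set \<Rightarrow> ('b \<Rightarrow> 'b \<Rightarrow> bool) \<Rightarrow> 'b set \<Rightarrow> 'b \<Rightarrow> bool" where
  "is_glb L le A x \<longleftrightarrow> x \<in> L \<and> (\<forall>a\<in>A. le x a) \<and> (\<forall>y\<in>L. (\<forall>a\<in>A. le y a) \<longrightarrow> le y x)"

definition lsup :: "'b set \<Rightarrow> ('b \<Rightarrow> 'b \<Rightarrow> bool) \<Rightarrow> 'b set \<Rightarrow> 'b" where
  "lsup L le A = (THE x. is_lub L le A x)"

definition linf :: "'b set \<Rightarrow> ('b \<Rightarrow> 'b \<Rightarrow> bool) \<Rightarrow> 'b set \<Rightarrow> 'b" where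
  "linf L le A = (THE x. is_glb L le A x)"

definition ljoin :: "'b set \<Rightarrow> ('b \<Rightarrow> 'b \<Rightarrow> bool) \<Rightarrow> 'b \<Rightarrow> 'b \<Rightarrow> 'b" where
  "ljoin L le a b = lsup L le {a, b}"

definition lmeet :: "'b set \<Rightarrow> ('b \<Rightarrow> 'b \<Rightarrow> bool) \<Rightarrow> 'b \<Rightarrow> 'b \<Rightarrow> 'b" where
  "lmeet L le a b = linf L le {a, b}"

text \<open>Completely join-irreducible: j = \<Or>S implies j \<in> S (the least element,
  being the join of the empty set, is excluded automatically).\<close>
definition completely_join_irreducible :: "'b set \<Rightarrow> ('b \<Rightarrow> 'b \<Rightarrow> bool) \<Rightarrow> 'b \<Rightarrow> bool" where
  "completely_join_irreducible L le j \<longleftrightarrow>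
     j \<in> L \<and> (\<forall>S. S \<subseteq> L \<longrightarrow> is_lub L le S j \<longrightarrow> j \<in> S)"

definition spatial :: "'b set \<Rightarrow> ('b \<Rightarrow> 'b \<Rightarrow> bool) \<Rightarrow> bool" where
  "spatial L le \<longleftrightarrow>
     (\<forall>x\<in>L. is_lub L le {j \<in> L. completely_join_irreducible L le j \<and> le j x} x)"

definition completely_distributive :: "'b set \<Rightarrow> ('b \<Rightarrow> 'b \<Rightarrow> bool) \<Rightarrow> bool" where
  "completely_distributive L le \<longleftrightarrow>
     (\<forall>\<A>. \<A> \<subseteq> Pow L \<longrightarrow>
        linf L le ((\<lambda>A. lsup L le A) ` \<A>) =
        lsup L le {linf L le (f ` \<A>) | f. \<forall>A\<in>\<A>. f A \<in> A})"

definition is_rpc :: "'b set \<Rightarrow> ('b \<Rightarrow> 'b \<Rightarrow> bool) \<Rightarrow> 'b \<Rightarrow> 'b \<Rightarrow> 'b \<Rightarrow> bool" where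
  "is_rpc L le a c x \<longleftrightarrow> x \<in> L \<and> le (lmeet L le a x) c \<and>
     (\<forall>y\<in>L. le (lmeet L le a y) c \<longrightarrow> le y x)"

definition rpc :: "'b set \<Rightarrow> ('b \<Rightarrow> 'b \<Rightarrow> bool) \<Rightarrow> 'b \<Rightarrow> 'b \<Rightarrow> 'b" where
  "rpc L le a c = (THE x. is_rpc L le a c x)"

definition kleene_algebra ::
  "'b set \<Rightarrow> ('b \<Rightarrow> 'b \<Rightarrow> bool) \<Rightarrow> ('b \<Rightarrow> 'b) \<Rightarrow> 'b \<Rightarrow> 'b \<Rightarrow> bool" where
  "kleene_algebra L le neg bt tp \<longleftrightarrow>
     (\<forall>a\<in>L. le a a) \<and>
     (\<forall>a\<in>L. \<forall>b\<in>L. le a b \<and> le b a \<longrightarrow> a = b) \<and>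
     (\<forall>a\<in>L. \<forall>b\<in>L. \<forall>c\<in>L. le a b \<and> le b c \<longrightarrow> le a c) \<and>
     (\<forall>a\<in>L. \<forall>b\<in>L. (\<exists>x. is_lub L le {a, b} x) \<and> (\<exists>x. is_glb L le {a, b} x)) \<and>
     bt \<in> L \<and> tp \<in> L \<and> (\<forall>a\<in>L. le bt a \<and> le a tp) \<and>
     (\<forall>a\<in>L. \<forall>b\<in>L. \<forall>c\<in>L.
        lmeet L le a (ljoin L le b c) = ljoin L le (lmeet L le a b) (lmeet L le a c)) \<and>
     (\<forall>a\<in>L. neg a \<in> L \<and> neg (neg a) = a) \<and>
     (\<forall>a\<in>L. \<forall>b\<in>L. neg (ljoin L le a b) = lmeet L le (neg a) (neg b)) \<and>
     (\<forall>a\<in>L. \<forall>b\<in>L. neg (lmeet L le a b) = ljoin L le (neg a) (neg b)) \<and>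
     (\<forall>a\<in>L. \<forall>b\<in>L. le (lmeet L le a (neg a)) (ljoin L le b (neg b)))"

definition nelson_imp ::
  "'b set \<Rightarrow> ('b \<Rightarrow> 'b \<Rightarrow> bool) \<Rightarrow> ('b \<Rightarrow> 'b) \<Rightarrow> 'b \<Rightarrow> 'b \<Rightarrow> 'b" where
  "nelson_imp L le neg a b = rpc L le a (ljoin L le (neg a) b)"

definition nelson_algebra ::
  "'b set \<Rightarrow> ('b \<Rightarrow> 'b \<Rightarrow> bool) \<Rightarrow> ('b \<Rightarrow> 'b) \<Rightarrow> 'b \<Rightarrow> 'b \<Rightarrow> bool" where
  "nelson_algebra L le neg bt tp \<longleftrightarrow>
     kleene_algebra L le neg bt tp \<and>
     (\<forall>a\<in>L. \<forall>b\<in>L. \<exists>x. is_rpc L le a (ljoin L le (neg a) b) x) \<and>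
     (\<forall>a\<in>L. \<forall>b\<in>L. \<forall>c\<in>L.
        nelson_imp L le neg (lmeet L le a b) c = nelson_imp L le neg a (nelson_imp L le neg b c))"

definition Rimg :: "'a set \<Rightarrow> ('a \<times> 'a) set \<Rightarrow> 'a \<Rightarrow> 'a set" where
  "Rimg U R x = {y \<in> U. (x, y) \<in> R}"

definition Rinv :: "'a set \<Rightarrow> ('a \<times> 'a) set \<Rightarrow> 'a \<Rightarrow> 'a set" where
  "Rinv U R x = {y \<in> U. (y, x) \<in> R}"

(* X^blacktriangledown *)
definition lowB :: "'a set \<Rightarrow> ('a \<times> 'a) set \<Rightarrow> 'a set \<Rightarrow> 'a set" where
  "lowB U R X = {x \<in> U. Rimg U R x \<subseteq> X}"

(* X^blacktriangle *)
definition upB :: "'a set \<Rightarrow> ('a \<times> 'a) set \<Rightarrow> 'a set \<Rightarrow> 'a set" where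
  "upB U R X = {x \<in> U. Rimg U R x \<inter> X \<noteq> {}}"

(* X^triangledown *)
definition lowW :: "'a set \<Rightarrow> ('a \<times> 'a) set \<Rightarrow> 'a set \<Rightarrow> 'a set" where
  "lowW U R X = {x \<in> U. Rinv U R x \<subseteq> X}"

(* X^vartriangle *)
definition upW :: "'a set \<Rightarrow> ('a \<times> 'a) set \<Rightarrow> 'a set \<Rightarrow> 'a set" where
  "upW U R X = {x \<in> U. Rinv U R x \<inter> X \<noteq> {}}"

definition singletons :: "'a set \<Rightarrow> ('a \<times> 'a) set \<Rightarrow> 'a set" where
  "singletons U R = {x \<in> U. card (Rimg U R x) = 1}"

definition DMRS :: "'a set \<Rightarrow> ('a \<times> 'a) set \<Rightarrow> ('a set \<times> 'a set) set" where
  "DMRS U R = {(A, B). A \<in> lowB U R ` Pow U \<and> B \<in> upB U R ` Pow U \<and>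
      upB U R (upW U R A) \<subseteq> B \<and> A \<inter> singletons U R = B \<inter> singletons U R}"

definition pair_le :: "'a set \<times> 'a set \<Rightarrow> 'a set \<times> 'a set \<Rightarrow> bool" where
  "pair_le p q \<longleftrightarrow> fst p \<subseteq> fst q \<and> snd p \<subseteq> snd q"

definition dm_neg :: "'a set \<Rightarrow> 'a set \<times> 'a set \<Rightarrow> 'a set \<times> 'a set" where
  "dm_neg U p = (U - snd p, U - fst p)"

end

theory Submission
  imports Defs
begin

text \<open>
  In a completely distributive spatial lattice with a De Morgan negation \<open>\<sim>\<close>, both sides of
  the Nelson identity \<open>(a \<sqinter> b) \<rightarrow> c = a \<rightarrow> (b \<rightarrow> c)\<close> can be read off on completely
  join-irreducible elements: \<open>j \<le> a \<rightarrow> b\<close> iff every join-irreducible \<open>k \<le> j\<close> with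
  \<open>k, g k \<le> a\<close> lies below \<open>b\<close>, where \<open>g k = \<sim>\<kappa>(k)\<close> and \<open>\<kappa>(k)\<close> is the greatest element
  not above \<open>k\<close>. The identity thus holds iff between any join-irreducibles \<open>m \<le> k\<close> there is a
  join-irreducible \<open>n\<close> with \<open>n \<le> m \<squnion> g m\<close> and \<open>g n \<le> k \<squnion> g k\<close>.

  In \<open>DM(RS)\<close> the join-irreducibles are the pairs \<open>(R(c)\<^sup>\<blacktriangledown>, R(c)\<^sup>\<blacktriangle>)\<close> and, for \<open>z \<notin> \<S>\<close>,
  the pairs \<open>(\<emptyset>, {z}\<^sup>\<blacktriangle>)\<close>; the latter are join-irreducible exactly when \<open>{z}\<^sup>\<blacktriangle>\<close> is so in
  \<open>\<wp>(U)\<^sup>\<blacktriangle>\<close>. The map \<open>g\<close> exchanges the two kinds, sending \<open>(\<emptyset>, {y}\<^sup>\<blacktriangle>)\<close> to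
  \<open>(R(b)\<^sup>\<blacktriangledown>, R(b)\<^sup>\<blacktriangle>)\<close> for a predecessor \<open>b\<close> of \<open>y\<close> with least \<open>R(b)\<close>. All instances of
  the lattice condition are then trivial except \<open>m = (\<emptyset>, {x}\<^sup>\<blacktriangle>)\<close>, \<open>g k = (\<emptyset>, {y}\<^sup>\<blacktriangle>)\<close>,
  where a witness amounts to a join-irreducible \<open>{z}\<^sup>\<blacktriangle>\<close> containing \<open>{x}\<^sup>\<blacktriangle>\<close> and
  \<open>{y}\<^sup>\<blacktriangle>\<close>.
\<close>

section \<open>Completely distributive spatial lattices\<close>

locale cd_spatial_lattice =
  fixes L :: "'b set" and le :: "'b \<Rightarrow> 'b \<Rightarrow> bool" (infix "\<sqsubseteq>" 50)
  assumes le_refl: "a \<in> L \<Longrightarrow> a \<sqsubseteq> a"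
    and le_antisym: "a \<in> L \<Longrightarrow> b \<in> L \<Longrightarrow> a \<sqsubseteq> b \<Longrightarrow> b \<sqsubseteq> a \<Longrightarrow> a = b"
    and le_trans: "a \<in> L \<Longrightarrow> b \<in> L \<Longrightarrow> c \<in> L \<Longrightarrow> a \<sqsubseteq> b \<Longrightarrow> b \<sqsubseteq> c \<Longrightarrow> a \<sqsubseteq> c"
    and lub_exists: "A \<subseteq> L \<Longrightarrow> \<exists>x. is_lub L le A x"
    and glb_exists: "A \<subseteq> L \<Longrightarrow> \<exists>x. is_glb L le A x"
    and completely_distributive: "completely_distributive L le"
    and spatial: "spatial L le"
begin

abbreviation join (infixl "\<squnion>" 65) where "a \<squnion> b \<equiv> ljoin L le a b"
abbreviation meet (infixl "\<sqinter>" 70) where "a \<sqinter> b \<equiv> lmeet L le a b"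
abbreviation cji where "cji j \<equiv> completely_join_irreducible L le j"

lemma is_lub_unique: "is_lub L le A x \<Longrightarrow> is_lub L le A y \<Longrightarrow> x = y"
  unfolding is_lub_def using le_antisym by blast

lemma is_glb_unique: "is_glb L le A x \<Longrightarrow> is_glb L le A y \<Longrightarrow> x = y"
  unfolding is_glb_def using le_antisym by blast

lemma lsup_eqI: "is_lub L le A x \<Longrightarrow> lsup L le A = x"
  unfolding lsup_def by (rule the_equality) (auto intro: is_lub_unique)

lemma linf_eqI: "is_glb L le A x \<Longrightarrow> linf L le A = x"
  unfolding linf_def by (rule the_equality) (auto intro: is_glb_unique)

lemma is_lub_lsup: "A \<subseteq> L \<Longrightarrow> is_lub L le A (lsup L le A)"
  using lub_exists lsup_eqI by metis

lemma is_glb_linf: "A \<subseteq> L \<Longrightarrow> is_glb L le A (linf L le A)"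
  using glb_exists linf_eqI by metis

lemma lsup_closed: "A \<subseteq> L \<Longrightarrow> lsup L le A \<in> L"
  using is_lub_lsup unfolding is_lub_def by blast

lemma lsup_upper: "A \<subseteq> L \<Longrightarrow> a \<in> A \<Longrightarrow> a \<sqsubseteq> lsup L le A"
  using is_lub_lsup unfolding is_lub_def by blast

lemma lsup_least: "A \<subseteq> L \<Longrightarrow> y \<in> L \<Longrightarrow> (\<And>a. a \<in> A \<Longrightarrow> a \<sqsubseteq> y) \<Longrightarrow> lsup L le A \<sqsubseteq> y"
  using is_lub_lsup unfolding is_lub_def by blast

lemma lsup_singleton: "a \<in> L \<Longrightarrow> lsup L le {a} = a"
  by (rule lsup_eqI) (auto simp: is_lub_def le_refl)

lemma join_closed: "a \<in> L \<Longrightarrow> b \<in> L \<Longrightarrow> a \<squnion> b \<in> L"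
  unfolding ljoin_def by (rule lsup_closed) auto

lemma join_upper1: "a \<in> L \<Longrightarrow> b \<in> L \<Longrightarrow> a \<sqsubseteq> a \<squnion> b"
  unfolding ljoin_def by (rule lsup_upper) auto

lemma join_upper2: "a \<in> L \<Longrightarrow> b \<in> L \<Longrightarrow> b \<sqsubseteq> a \<squnion> b"
  unfolding ljoin_def by (rule lsup_upper) auto

lemma join_least: "a \<in> L \<Longrightarrow> b \<in> L \<Longrightarrow> y \<in> L \<Longrightarrow> a \<sqsubseteq> y \<Longrightarrow> b \<sqsubseteq> y \<Longrightarrow> a \<squnion> b \<sqsubseteq> y"
  unfolding ljoin_def by (rule lsup_least) auto

lemma meet_closed: "a \<in> L \<Longrightarrow> b \<in> L \<Longrightarrow> a \<sqinter> b \<in> L"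
  unfolding lmeet_def using is_glb_linf[of "{a, b}"] unfolding is_glb_def by auto

lemma le_meet_iff:
  assumes a: "a \<in> L" and b: "b \<in> L" and x: "x \<in> L"
  shows "x \<sqsubseteq> a \<sqinter> b \<longleftrightarrow> x \<sqsubseteq> a \<and> x \<sqsubseteq> b"
proof -
  have glb: "is_glb L le {a, b} (a \<sqinter> b)" unfolding lmeet_def using a b by (intro is_glb_linf) auto
  then have m: "a \<sqinter> b \<in> L" "a \<sqinter> b \<sqsubseteq> a" "a \<sqinter> b \<sqsubseteq> b" unfolding is_glb_def by auto
  show ?thesis
  proof
    assume "x \<sqsubseteq> a \<sqinter> b"
    then show "x \<sqsubseteq> a \<and> x \<sqsubseteq> b" using le_trans[OF x m(1)] m a b by blast
  next
    assume "x \<sqsubseteq> a \<and> x \<sqsubseteq> b"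
    then show "x \<sqsubseteq> a \<sqinter> b" using glb x unfolding is_glb_def by blast
  qed
qed

lemma meet_lower1: "a \<in> L \<Longrightarrow> b \<in> L \<Longrightarrow> a \<sqinter> b \<sqsubseteq> a"
  using le_meet_iff[OF _ _ meet_closed] le_refl[OF meet_closed] by blast

lemma meet_lower2: "a \<in> L \<Longrightarrow> b \<in> L \<Longrightarrow> a \<sqinter> b \<sqsubseteq> b"
  using le_meet_iff[OF _ _ meet_closed] le_refl[OF meet_closed] by blast

text \<open>Complete distributivity is used only through this infinite distributive law.\<close>
lemma meet_lsup_distrib:
  assumes a: "a \<in> L" and X: "X \<subseteq> L"
  shows "a \<sqinter> lsup L le X = lsup L le {a \<sqinter> x | x. x \<in> X}"
proof -
  let ?A = "{{a}, X}"
  have choices: "{linf L le (f ` ?A) | f. \<forall>A\<in>?A. f A \<in> A} = {a \<sqinter> x | x. x \<in> X}"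
  proof (intro set_eqI iffI)
    fix y assume "y \<in> {linf L le (f ` ?A) | f. \<forall>A\<in>?A. f A \<in> A}"
    then obtain f where "\<forall>A\<in>?A. f A \<in> A" and "y = linf L le (f ` ?A)" by blast
    then show "y \<in> {a \<sqinter> x | x. x \<in> X}" unfolding lmeet_def by auto
  next
    fix y assume "y \<in> {a \<sqinter> x | x. x \<in> X}"
    then obtain x where x: "x \<in> X" and y: "y = a \<sqinter> x" by blast
    define f where "f A = (if A = {a} then a else x)" for A
    have f: "\<forall>A\<in>?A. f A \<in> A" and "f ` ?A = {a, x}" using x by (auto simp: f_def)
    then have "y = linf L le (f ` ?A)" unfolding y lmeet_def by simp
    with f show "y \<in> {linf L le (f ` ?A) | f. \<forall>A\<in>?A. f A \<in> A}" by blast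
  qed
  have "?A \<subseteq> Pow L" using a X by auto
  then have "linf L le (lsup L le ` ?A) = lsup L le {linf L le (f ` ?A) | f. \<forall>A\<in>?A. f A \<in> A}"
    using completely_distributive unfolding completely_distributive_def by blast
  moreover have "linf L le (lsup L le ` ?A) = a \<sqinter> lsup L le X"
    unfolding lmeet_def using lsup_singleton[OF a] by simp
  ultimately show ?thesis by (simp only: choices)
qed

lemma meet_join_distrib:
  "a \<in> L \<Longrightarrow> b \<in> L \<Longrightarrow> c \<in> L \<Longrightarrow> a \<sqinter> (b \<squnion> c) = (a \<sqinter> b) \<squnion> (a \<sqinter> c)"
proof -
  assume "a \<in> L" "b \<in> L" "c \<in> L"
  moreover have "{a \<sqinter> x | x. x \<in> {b, c}} = {a \<sqinter> b, a \<sqinter> c}" by blast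
  ultimately show ?thesis using meet_lsup_distrib[of a "{b, c}"] unfolding ljoin_def by simp
qed

lemma cji_closed: "cji j \<Longrightarrow> j \<in> L"
  unfolding completely_join_irreducible_def by blast

lemma cji_le_lsupD:
  assumes j: "cji j" and X: "X \<subseteq> L" and le: "j \<sqsubseteq> lsup L le X"
  shows "\<exists>x\<in>X. j \<sqsubseteq> x"
proof -
  have jL: "j \<in> L" and sL: "lsup L le X \<in> L" using cji_closed[OF j] lsup_closed[OF X] .
  have "j \<sqsubseteq> j \<sqinter> lsup L le X" using le_meet_iff[OF jL sL jL] le_refl[OF jL] le by blast
  then have "j \<sqinter> lsup L le X = j"
    using le_antisym[OF meet_closed[OF jL sL] jL] meet_lower1[OF jL sL] by blast
  moreover have sub: "{j \<sqinter> x | x. x \<in> X} \<subseteq> L" using X jL meet_closed by blast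
  ultimately have "is_lub L le {j \<sqinter> x | x. x \<in> X} j"
    using meet_lsup_distrib[OF jL X] is_lub_lsup[OF sub] by simp
  then have "j \<in> {j \<sqinter> x | x. x \<in> X}"
    using j sub unfolding completely_join_irreducible_def by blast
  then obtain x where "x \<in> X" and "j = j \<sqinter> x" by blast
  moreover have "j \<sqinter> x \<sqsubseteq> x" using meet_lower2[OF jL] \<open>x \<in> X\<close> X by blast
  ultimately show ?thesis by auto
qed

lemma cji_le_join_iff:
  assumes j: "cji j" and a: "a \<in> L" and b: "b \<in> L"
  shows "j \<sqsubseteq> a \<squnion> b \<longleftrightarrow> j \<sqsubseteq> a \<or> j \<sqsubseteq> b"
proof
  assume "j \<sqsubseteq> a \<squnion> b"
  then show "j \<sqsubseteq> a \<or> j \<sqsubseteq> b" using cji_le_lsupD[OF j, of "{a, b}"] a b unfolding ljoin_def by auto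
next
  assume "j \<sqsubseteq> a \<or> j \<sqsubseteq> b"
  then show "j \<sqsubseteq> a \<squnion> b"
    using le_trans[OF cji_closed[OF j] a join_closed[OF a b]]
      le_trans[OF cji_closed[OF j] b join_closed[OF a b]] join_upper1[OF a b] join_upper2[OF a b]
    by blast
qed

lemma le_if_cji_le:
  assumes a: "a \<in> L" and b: "b \<in> L" and cji_le: "\<And>j. cji j \<Longrightarrow> j \<sqsubseteq> a \<Longrightarrow> j \<sqsubseteq> b"
  shows "a \<sqsubseteq> b"
  using spatial a b cji_le unfolding spatial_def is_lub_def by blast

lemma is_rpc_lsup:
  assumes a: "a \<in> L" and c: "c \<in> L"
  shows "is_rpc L le a c (lsup L le {y \<in> L. a \<sqinter> y \<sqsubseteq> c})"
proof -
  let ?Y = "{y \<in> L. a \<sqinter> y \<sqsubseteq> c}"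
  have "a \<sqinter> lsup L le ?Y = lsup L le {a \<sqinter> y | y. y \<in> ?Y}"
    using meet_lsup_distrib[OF a, of ?Y] by blast
  also have "\<dots> \<sqsubseteq> c" by (rule lsup_least) (use a c meet_closed in auto)
  finally have "a \<sqinter> lsup L le ?Y \<sqsubseteq> c" .
  moreover have "\<forall>y\<in>L. a \<sqinter> y \<sqsubseteq> c \<longrightarrow> y \<sqsubseteq> lsup L le ?Y" using lsup_upper[of ?Y] by blast
  ultimately show ?thesis unfolding is_rpc_def using lsup_closed[of ?Y] by blast
qed

lemma is_rpc_unique: "is_rpc L le a c x \<Longrightarrow> is_rpc L le a c y \<Longrightarrow> x = y"
  unfolding is_rpc_def using le_antisym by blast

lemma is_rpc_rpc: "a \<in> L \<Longrightarrow> c \<in> L \<Longrightarrow> is_rpc L le a c (rpc L le a c)"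
proof -
  assume "a \<in> L" "c \<in> L"
  then obtain x where x: "is_rpc L le a c x" using is_rpc_lsup by blast
  then have "rpc L le a c = x" unfolding rpc_def by (rule the_equality) (use x is_rpc_unique in blast)
  with x show ?thesis by simp
qed

lemma rpc_closed: "a \<in> L \<Longrightarrow> c \<in> L \<Longrightarrow> rpc L le a c \<in> L"
  using is_rpc_rpc[of a c] unfolding is_rpc_def by blast

lemma cji_le_rpc_iff:
  assumes a: "a \<in> L" and c: "c \<in> L" and j: "cji j"
  shows "j \<sqsubseteq> rpc L le a c \<longleftrightarrow> (\<forall>k. cji k \<longrightarrow> k \<sqsubseteq> j \<longrightarrow> k \<sqsubseteq> a \<longrightarrow> k \<sqsubseteq> c)"
proof -
  let ?r = "rpc L le a c"
  have r: "?r \<in> L" "a \<sqinter> ?r \<sqsubseteq> c" "\<And>y. y \<in> L \<Longrightarrow> a \<sqinter> y \<sqsubseteq> c \<Longrightarrow> y \<sqsubseteq> ?r"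
    using is_rpc_rpc[OF a c] unfolding is_rpc_def by auto
  have jL: "j \<in> L" using cji_closed[OF j] .
  show ?thesis
  proof
    assume j_le: "j \<sqsubseteq> ?r"
    show "\<forall>k. cji k \<longrightarrow> k \<sqsubseteq> j \<longrightarrow> k \<sqsubseteq> a \<longrightarrow> k \<sqsubseteq> c"
    proof (intro allI impI)
      fix k assume k: "cji k" "k \<sqsubseteq> j" "k \<sqsubseteq> a"
      have kL: "k \<in> L" using cji_closed[OF k(1)] .
      have "k \<sqsubseteq> ?r" using le_trans[OF kL jL r(1)] k(2) j_le by blast
      then have "k \<sqsubseteq> a \<sqinter> ?r" using le_meet_iff[OF a r(1) kL] k(3) by blast
      then show "k \<sqsubseteq> c" using le_trans[OF kL meet_closed[OF a r(1)] c] r(2) by blast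
    qed
  next
    assume below: "\<forall>k. cji k \<longrightarrow> k \<sqsubseteq> j \<longrightarrow> k \<sqsubseteq> a \<longrightarrow> k \<sqsubseteq> c"
    have "a \<sqinter> j \<sqsubseteq> c"
    proof (rule le_if_cji_le[OF meet_closed[OF a jL] c])
      fix k assume k: "cji k" "k \<sqsubseteq> a \<sqinter> j"
      then have "k \<sqsubseteq> a" "k \<sqsubseteq> j" using le_meet_iff[OF a jL cji_closed[OF k(1)]] by auto
      then show "k \<sqsubseteq> c" using below k(1) by blast
    qed
    then show "j \<sqsubseteq> ?r" using r(3)[OF jL] by blast
  qed
qed

end

section \<open>De Morgan negation and the Nelson identity\<close>

locale cd_spatial_de_morgan_lattice = cd_spatial_lattice +
  fixes neg
  assumes neg_closed: "a \<in> L \<Longrightarrow> neg a \<in> L"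
    and neg_neg: "a \<in> L \<Longrightarrow> neg (neg a) = a"
    and neg_antimono: "a \<in> L \<Longrightarrow> b \<in> L \<Longrightarrow> a \<sqsubseteq> b \<Longrightarrow> neg b \<sqsubseteq> neg a"
begin

lemma neg_le_neg_iff: "a \<in> L \<Longrightarrow> b \<in> L \<Longrightarrow> neg b \<sqsubseteq> neg a \<longleftrightarrow> a \<sqsubseteq> b"
  using neg_antimono neg_neg neg_closed by metis

lemma le_neg_iff_le_neg: "a \<in> L \<Longrightarrow> b \<in> L \<Longrightarrow> a \<sqsubseteq> neg b \<longleftrightarrow> b \<sqsubseteq> neg a"
  using neg_le_neg_iff neg_neg neg_closed by metis

lemma neg_join:
  assumes a: "a \<in> L" and b: "b \<in> L"
  shows "neg (a \<squnion> b) = neg a \<sqinter> neg b"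
proof -
  have ab: "a \<squnion> b \<in> L" using join_closed[OF a b] .
  have "is_glb L le {neg a, neg b} (neg (a \<squnion> b))" unfolding is_glb_def
  proof (intro conjI ballI impI)
    show "neg (a \<squnion> b) \<in> L" using neg_closed[OF ab] .
    fix x assume "x \<in> {neg a, neg b}"
    then show "neg (a \<squnion> b) \<sqsubseteq> x"
      using neg_antimono[OF a ab join_upper1[OF a b]] neg_antimono[OF b ab join_upper2[OF a b]] by blast
  next
    fix y assume y: "y \<in> L" and lower: "\<forall>x\<in>{neg a, neg b}. y \<sqsubseteq> x"
    have "a \<sqsubseteq> neg y" "b \<sqsubseteq> neg y" using lower le_neg_iff_le_neg[OF a y] le_neg_iff_le_neg[OF b y] by auto
    then have "a \<squnion> b \<sqsubseteq> neg y" using join_least[OF a b neg_closed[OF y]] by blast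
    then show "y \<sqsubseteq> neg (a \<squnion> b)" using le_neg_iff_le_neg[OF ab y] by blast
  qed
  then show ?thesis unfolding lmeet_def by (rule linf_eqI[symmetric])
qed

lemma neg_meet:
  assumes a: "a \<in> L" and b: "b \<in> L"
  shows "neg (a \<sqinter> b) = neg a \<squnion> neg b"
proof -
  have "neg (neg a \<squnion> neg b) = a \<sqinter> b"
    using neg_join[OF neg_closed[OF a] neg_closed[OF b]] neg_neg[OF a] neg_neg[OF b] by simp
  then show ?thesis using neg_neg[OF join_closed[OF neg_closed[OF a] neg_closed[OF b]]] by simp
qed

text \<open>For completely join-irreducible \<open>j\<close>, \<open>\<kappa>(j)\<close> is the greatest element not above \<open>j\<close>
  (by primeness), and \<open>g j = \<sim>\<kappa>(j)\<close> is an order-reversing involution of the completely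
  join-irreducible elements.\<close>
definition kappa where
  "kappa j = lsup L le {x \<in> L. \<not> j \<sqsubseteq> x}"

definition g where
  "g j = neg (kappa j)"

lemma kappa_closed: "kappa j \<in> L"
  unfolding kappa_def by (rule lsup_closed) auto

lemma le_kappa_iff:
  assumes j: "cji j" and x: "x \<in> L"
  shows "x \<sqsubseteq> kappa j \<longleftrightarrow> \<not> j \<sqsubseteq> x"
proof
  assume x_le: "x \<sqsubseteq> kappa j"
  have "\<not> j \<sqsubseteq> kappa j" using cji_le_lsupD[OF j, of "{x \<in> L. \<not> j \<sqsubseteq> x}"] unfolding kappa_def by auto
  then show "\<not> j \<sqsubseteq> x" using le_trans[OF cji_closed[OF j] x kappa_closed] x_le by blast
next
  assume "\<not> j \<sqsubseteq> x"
  then show "x \<sqsubseteq> kappa j" unfolding kappa_def using x by (intro lsup_upper) auto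
qed

lemma g_closed: "g j \<in> L"
  unfolding g_def using neg_closed[OF kappa_closed] .

lemma g_le_iff:
  assumes j: "cji j" and x: "x \<in> L"
  shows "g j \<sqsubseteq> x \<longleftrightarrow> \<not> j \<sqsubseteq> neg x"
proof -
  have "g j \<sqsubseteq> x \<longleftrightarrow> neg x \<sqsubseteq> kappa j"
    unfolding g_def using neg_le_neg_iff[OF neg_closed[OF x] kappa_closed] neg_neg[OF x] by simp
  also have "\<dots> \<longleftrightarrow> \<not> j \<sqsubseteq> neg x" using le_kappa_iff[OF j neg_closed[OF x]] .
  finally show ?thesis .
qed

lemma cji_g:
  assumes j: "cji j"
  shows "cji (g j)"
  unfolding completely_join_irreducible_def
proof (intro conjI allI impI g_closed)
  fix S assume S: "S \<subseteq> L" and lub: "is_lub L le S (g j)"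
  have jL: "j \<in> L" using cji_closed[OF j] .
  show "g j \<in> S"
  proof (rule ccontr)
    assume g_notin: "g j \<notin> S"
    have "t \<sqsubseteq> neg j" if t: "t \<in> S" for t
    proof -
      have tL: "t \<in> L" using t S by blast
      have "t \<sqsubseteq> g j" using lub t unfolding is_lub_def by blast
      then have "\<not> g j \<sqsubseteq> t" using le_antisym[OF tL g_closed] t g_notin by blast
      then have "j \<sqsubseteq> neg t" using g_le_iff[OF j tL] by blast
      then show ?thesis using le_neg_iff_le_neg[OF jL tL] by blast
    qed
    then have "g j \<sqsubseteq> neg j" using lub neg_closed[OF jL] unfolding is_lub_def by blast
    then show False using g_le_iff[OF j neg_closed[OF jL]] neg_neg[OF jL] le_refl[OF jL] by simp
  qed
qed

lemma g_g:
  assumes j: "cji j"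
  shows "g (g j) = j"
proof (rule le_antisym[OF g_closed cji_closed[OF j]])
  have gg_le_iff: "g (g j) \<sqsubseteq> x \<longleftrightarrow> j \<sqsubseteq> x" if x: "x \<in> L" for x
    using g_le_iff[OF cji_g[OF j] x] g_le_iff[OF j neg_closed[OF x]] neg_neg[OF x] by simp
  show "g (g j) \<sqsubseteq> j" using gg_le_iff[OF cji_closed[OF j]] le_refl[OF cji_closed[OF j]] by blast
  show "j \<sqsubseteq> g (g j)" using gg_le_iff[OF g_closed] le_refl[OF g_closed] by blast
qed

lemma g_antimono:
  assumes j: "cji j" and k: "cji k" and le: "j \<sqsubseteq> k"
  shows "g k \<sqsubseteq> g j"
proof -
  have "\<not> j \<sqsubseteq> neg (g j)" using g_le_iff[OF j g_closed] le_refl[OF g_closed] by blast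
  then have "\<not> k \<sqsubseteq> neg (g j)"
    using le_trans[OF cji_closed[OF j] cji_closed[OF k] neg_closed[OF g_closed]] le by blast
  then show ?thesis using g_le_iff[OF k g_closed] by blast
qed

lemma g_le_g_iff: "cji j \<Longrightarrow> cji k \<Longrightarrow> g j \<sqsubseteq> g k \<longleftrightarrow> k \<sqsubseteq> j"
  using g_antimono cji_g g_g by metis

lemma le_g_iff_le_g: "cji j \<Longrightarrow> cji k \<Longrightarrow> j \<sqsubseteq> g k \<longleftrightarrow> k \<sqsubseteq> g j"
  using g_le_g_iff[of "g k" j] cji_g g_g by metis

lemma nelson_imp_closed: "a \<in> L \<Longrightarrow> b \<in> L \<Longrightarrow> nelson_imp L le neg a b \<in> L"
  unfolding nelson_imp_def using rpc_closed join_closed neg_closed by blast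

lemma cji_le_nelson_imp_iff:
  assumes a: "a \<in> L" and b: "b \<in> L" and j: "cji j"
  shows "j \<sqsubseteq> nelson_imp L le neg a b \<longleftrightarrow>
    (\<forall>k. cji k \<longrightarrow> k \<sqsubseteq> j \<longrightarrow> k \<sqsubseteq> a \<longrightarrow> g k \<sqsubseteq> a \<longrightarrow> k \<sqsubseteq> b)"
proof -
  have "k \<sqsubseteq> neg a \<squnion> b \<longleftrightarrow> \<not> g k \<sqsubseteq> a \<or> k \<sqsubseteq> b" if k: "cji k" for k
    using cji_le_join_iff[OF k neg_closed[OF a] b] g_le_iff[OF k a] neg_neg[OF a] by simp
  then show ?thesis
    unfolding nelson_imp_def cji_le_rpc_iff[OF a join_closed[OF neg_closed[OF a] b] j] by blast
qed

definition nelson_witness where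
  "nelson_witness m k n \<longleftrightarrow> cji n \<and> m \<sqsubseteq> n \<and> n \<sqsubseteq> k \<and> n \<sqsubseteq> m \<squnion> g m \<and> g n \<sqsubseteq> k \<squnion> g k"

text \<open>Lattice form of condition (ii). A witness \<open>n\<close> is what lets a join-irreducible
  below \<open>a \<rightarrow> (b \<rightarrow> c)\<close> be pushed below \<open>(a \<sqinter> b) \<rightarrow> c\<close>; conversely the identity
  fails for \<open>a = k \<squnion> g k\<close>, \<open>b = m \<squnion> g m\<close>, \<open>c = \<kappa>(m)\<close> when there is no witness.\<close>
definition nelson_condition where
  "nelson_condition \<longleftrightarrow> (\<forall>m k. cji m \<longrightarrow> cji k \<longrightarrow> m \<sqsubseteq> k \<longrightarrow> (\<exists>n. nelson_witness m k n))"

lemma nelson_witness_iff: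
  assumes "cji m" and "cji k" and "cji n"
  shows "nelson_witness m k n \<longleftrightarrow>
    m \<sqsubseteq> n \<and> n \<sqsubseteq> k \<and> (n \<sqsubseteq> m \<or> n \<sqsubseteq> g m) \<and> (g n \<sqsubseteq> k \<or> g n \<sqsubseteq> g k)"
  unfolding nelson_witness_def
  using assms cji_le_join_iff cji_g cji_closed g_closed by simp

lemma nelson_witness_self:
  assumes m: "cji m" and k: "cji k" and mk: "m \<sqsubseteq> k" and gm: "g m \<sqsubseteq> m"
  shows "nelson_witness m k m"
proof -
  have "g m \<sqsubseteq> k" using le_trans[OF g_closed cji_closed[OF m] cji_closed[OF k]] gm mk by blast
  then show ?thesis unfolding nelson_witness_iff[OF m k m] using mk le_refl[OF cji_closed[OF m]] by blast
qed

lemma nelson_witness_upper: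
  assumes m: "cji m" and k: "cji k" and mk: "m \<sqsubseteq> k" and kg: "k \<sqsubseteq> g k"
  shows "nelson_witness m k k"
proof -
  have "k \<sqsubseteq> g m" using le_trans[OF cji_closed[OF k] g_closed g_closed] kg g_antimono[OF m k mk] by blast
  then show ?thesis unfolding nelson_witness_iff[OF m k k] using mk le_refl[OF cji_closed[OF k]] le_refl[OF g_closed]
    by blast
qed

lemma cji_le_nelson_imp_meet_iff:
  assumes a: "a \<in> L" and b: "b \<in> L" and c: "c \<in> L" and j: "cji j"
  shows "j \<sqsubseteq> nelson_imp L le neg (a \<sqinter> b) c \<longleftrightarrow>
    (\<forall>n. cji n \<longrightarrow> n \<sqsubseteq> j \<longrightarrow> n \<sqsubseteq> a \<longrightarrow> n \<sqsubseteq> b \<longrightarrow> g n \<sqsubseteq> a \<longrightarrow> g n \<sqsubseteq> b \<longrightarrow> n \<sqsubseteq> c)"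
proof -
  have "n \<sqsubseteq> a \<sqinter> b \<longleftrightarrow> n \<sqsubseteq> a \<and> n \<sqsubseteq> b" "g n \<sqsubseteq> a \<sqinter> b \<longleftrightarrow> g n \<sqsubseteq> a \<and> g n \<sqsubseteq> b"
    if "cji n" for n
    using le_meet_iff[OF a b cji_closed[OF that]] le_meet_iff[OF a b g_closed] by blast+
  then show ?thesis unfolding cji_le_nelson_imp_iff[OF meet_closed[OF a b] c j] by blast
qed

lemma cji_le_nelson_imp_nelson_imp_iff:
  assumes a: "a \<in> L" and b: "b \<in> L" and c: "c \<in> L" and j: "cji j"
  shows "j \<sqsubseteq> nelson_imp L le neg a (nelson_imp L le neg b c) \<longleftrightarrow>
    (\<forall>k m. cji k \<longrightarrow> cji m \<longrightarrow> m \<sqsubseteq> k \<longrightarrow> k \<sqsubseteq> j \<longrightarrow> k \<sqsubseteq> a \<longrightarrow> g k \<sqsubseteq> a \<longrightarrow>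
      m \<sqsubseteq> b \<longrightarrow> g m \<sqsubseteq> b \<longrightarrow> m \<sqsubseteq> c)"
  unfolding cji_le_nelson_imp_iff[OF a nelson_imp_closed[OF b c] j]
  by (auto simp: cji_le_nelson_imp_iff[OF b c])

lemma nelson_imp_nelson_imp_le:
  assumes a: "a \<in> L" and b: "b \<in> L" and c: "c \<in> L"
  shows "nelson_imp L le neg a (nelson_imp L le neg b c) \<sqsubseteq> nelson_imp L le neg (a \<sqinter> b) c"
proof (rule le_if_cji_le[OF nelson_imp_closed[OF a nelson_imp_closed[OF b c]]
      nelson_imp_closed[OF meet_closed[OF a b] c]])
  fix j assume j: "cji j" and "j \<sqsubseteq> nelson_imp L le neg a (nelson_imp L le neg b c)"
  then have below_c: "m \<sqsubseteq> c"
    if "cji k" "cji m" "m \<sqsubseteq> k" "k \<sqsubseteq> j" "k \<sqsubseteq> a" "g k \<sqsubseteq> a" "m \<sqsubseteq> b" "g m \<sqsubseteq> b" for k m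
    using that unfolding cji_le_nelson_imp_nelson_imp_iff[OF a b c j] by blast
  show "j \<sqsubseteq> nelson_imp L le neg (a \<sqinter> b) c"
    unfolding cji_le_nelson_imp_meet_iff[OF a b c j]
    using below_c le_refl[OF cji_closed] by blast
qed

lemma nelson_imp_meet_le:
  assumes cond: nelson_condition and a: "a \<in> L" and b: "b \<in> L" and c: "c \<in> L"
  shows "nelson_imp L le neg (a \<sqinter> b) c \<sqsubseteq> nelson_imp L le neg a (nelson_imp L le neg b c)"
proof (rule le_if_cji_le[OF nelson_imp_closed[OF meet_closed[OF a b] c]
      nelson_imp_closed[OF a nelson_imp_closed[OF b c]]])
  fix j assume j: "cji j" and "j \<sqsubseteq> nelson_imp L le neg (a \<sqinter> b) c"
  then have below_c: "n \<sqsubseteq> c" if "cji n" "n \<sqsubseteq> j" "n \<sqsubseteq> a" "n \<sqsubseteq> b" "g n \<sqsubseteq> a" "g n \<sqsubseteq> b" for n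
    using that unfolding cji_le_nelson_imp_meet_iff[OF a b c j] by blast
  show "j \<sqsubseteq> nelson_imp L le neg a (nelson_imp L le neg b c)"
    unfolding cji_le_nelson_imp_nelson_imp_iff[OF a b c j]
  proof (intro allI impI)
    fix k m assume k: "cji k" and m: "cji m" and mk: "m \<sqsubseteq> k" and kj: "k \<sqsubseteq> j"
      and ka: "k \<sqsubseteq> a" "g k \<sqsubseteq> a" and mb: "m \<sqsubseteq> b" "g m \<sqsubseteq> b"
    have kL: "k \<in> L" and mL: "m \<in> L" using k m cji_closed by blast+
    obtain n where n: "cji n" "m \<sqsubseteq> n" "n \<sqsubseteq> k" "n \<sqsubseteq> m \<squnion> g m" "g n \<sqsubseteq> k \<squnion> g k"
      using cond m k mk unfolding nelson_condition_def nelson_witness_def by blast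
    have nL: "n \<in> L" using cji_closed[OF n(1)] .
    have "m \<squnion> g m \<sqsubseteq> b" and "k \<squnion> g k \<sqsubseteq> a"
      using join_least[OF mL g_closed b] join_least[OF kL g_closed a] mb ka by blast+
    then have "n \<sqsubseteq> b" and "g n \<sqsubseteq> a"
      using le_trans[OF nL join_closed[OF mL g_closed] b] le_trans[OF g_closed join_closed[OF kL g_closed] a]
        n(4,5) by blast+
    moreover have "g n \<sqsubseteq> b" using le_trans[OF g_closed g_closed b] g_antimono[OF m n(1,2)] mb(2) by blast
    moreover have "n \<sqsubseteq> j" "n \<sqsubseteq> a" using le_trans[OF nL kL] cji_closed[OF j] a n(3) kj ka(1) by blast+
    ultimately have "n \<sqsubseteq> c" using below_c n(1) by blast
    then show "m \<sqsubseteq> c" using le_trans[OF mL nL c] n(2) by blast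
  qed
qed

lemma nelson_condition_if_nelson_identity:
  assumes identity: "\<forall>a\<in>L. \<forall>b\<in>L. \<forall>c\<in>L.
    nelson_imp L le neg (a \<sqinter> b) c = nelson_imp L le neg a (nelson_imp L le neg b c)"
  shows nelson_condition
  unfolding nelson_condition_def
proof (intro allI impI)
  fix m k assume m: "cji m" and k: "cji k" and mk: "m \<sqsubseteq> k"
  have mL: "m \<in> L" and kL: "k \<in> L" using cji_closed m k by blast+
  define a where "a = k \<squnion> g k"
  define b where "b = m \<squnion> g m"
  have a: "a \<in> L" and b: "b \<in> L" unfolding a_def b_def using join_closed g_closed mL kL by blast+
  have le_a: "x \<sqsubseteq> a \<longleftrightarrow> x \<sqsubseteq> k \<or> x \<sqsubseteq> g k" if "cji x" for x
    unfolding a_def using cji_le_join_iff[OF that kL g_closed] .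
  have le_b: "x \<sqsubseteq> b \<longleftrightarrow> x \<sqsubseteq> m \<or> x \<sqsubseteq> g m" if "cji x" for x
    unfolding b_def using cji_le_join_iff[OF that mL g_closed] .
  show "\<exists>n. nelson_witness m k n"
  proof (rule ccontr)
    assume no_witness: "\<not> ?thesis"
    have "k \<sqsubseteq> nelson_imp L le neg (a \<sqinter> b) (kappa m)"
      unfolding cji_le_nelson_imp_meet_iff[OF a b kappa_closed k]
      using no_witness le_kappa_iff[OF m cji_closed] unfolding a_def b_def nelson_witness_def by blast
    moreover have "\<not> k \<sqsubseteq> nelson_imp L le neg a (nelson_imp L le neg b (kappa m))"
      unfolding cji_le_nelson_imp_nelson_imp_iff[OF a b kappa_closed k]
      using k m mk le_a[OF k] le_a[OF cji_g[OF k]] le_b[OF m] le_b[OF cji_g[OF m]]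
        le_refl[OF kL] le_refl[OF mL] le_refl[OF g_closed] le_kappa_iff[OF m mL] by blast
    moreover have "nelson_imp L le neg (a \<sqinter> b) (kappa m)
        = nelson_imp L le neg a (nelson_imp L le neg b (kappa m))"
      using identity a b kappa_closed by blast
    ultimately show False by simp
  qed
qed

lemma nelson_identity_iff:
  "(\<forall>a\<in>L. \<forall>b\<in>L. \<forall>c\<in>L.
      nelson_imp L le neg (a \<sqinter> b) c = nelson_imp L le neg a (nelson_imp L le neg b c))
   \<longleftrightarrow> nelson_condition"
proof
  assume nelson_condition
  then show "\<forall>a\<in>L. \<forall>b\<in>L. \<forall>c\<in>L.
      nelson_imp L le neg (a \<sqinter> b) c = nelson_imp L le neg a (nelson_imp L le neg b c)"
  proof (intro ballI)
    fix a b c assume abc: "a \<in> L" "b \<in> L" "c \<in> L"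
    show "nelson_imp L le neg (a \<sqinter> b) c = nelson_imp L le neg a (nelson_imp L le neg b c)"
      using le_antisym[OF nelson_imp_closed[OF meet_closed[OF abc(1,2)] abc(3)]
          nelson_imp_closed[OF abc(1) nelson_imp_closed[OF abc(2,3)]]]
        nelson_imp_meet_le[OF \<open>nelson_condition\<close> abc] nelson_imp_nelson_imp_le[OF abc]
      by blast
  qed
qed (rule nelson_condition_if_nelson_identity)

lemma kleene_algebraI:
  assumes "bt \<in> L" and "tp \<in> L" and "\<forall>a\<in>L. bt \<sqsubseteq> a \<and> a \<sqsubseteq> tp"
    and "\<forall>a\<in>L. \<forall>b\<in>L. a \<sqinter> neg a \<sqsubseteq> b \<squnion> neg b"
  shows "kleene_algebra L le neg bt tp"
  unfolding kleene_algebra_def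
proof (intro conjI ballI impI)
  fix a b assume "a \<in> L" "b \<in> L"
  then show "\<exists>x. is_lub L le {a, b} x" and "\<exists>x. is_glb L le {a, b} x"
    using lub_exists glb_exists by auto
qed (simp_all add: assms le_refl le_antisym meet_join_distrib neg_closed neg_neg neg_join neg_meet,
     (blast intro: le_trans)?)

lemma nelson_algebra_iff:
  assumes "kleene_algebra L le neg bt tp"
  shows "nelson_algebra L le neg bt tp \<longleftrightarrow> nelson_condition"
  unfolding nelson_algebra_def nelson_identity_iff[symmetric] nelson_imp_def
  using assms is_rpc_rpc[OF _ join_closed[OF neg_closed]] by blast

end

section \<open>The lattice \<open>DM(RS)\<close> of a reflexive relation\<close>

locale refl_rough_space =
  fixes U :: "'a set" and R :: "('a \<times> 'a) set"
  assumes R_subset: "R \<subseteq> U \<times> U" and R_refl_on: "refl_on U R"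
begin

lemma R_in_U: "(x, y) \<in> R \<Longrightarrow> x \<in> U \<and> y \<in> U"
  using R_subset by blast

lemma R_refl: "x \<in> U \<Longrightarrow> (x, x) \<in> R"
  using R_refl_on unfolding refl_on_def by blast

lemma mem_Rimg [simp]: "y \<in> Rimg U R x \<longleftrightarrow> (x, y) \<in> R"
  unfolding Rimg_def using R_in_U by blast

lemma mem_Rinv [simp]: "y \<in> Rinv U R x \<longleftrightarrow> (y, x) \<in> R"
  unfolding Rinv_def using R_in_U by blast

lemma Rimg_subset_iff [simp]: "Rimg U R x \<subseteq> X \<longleftrightarrow> (\<forall>y. (x, y) \<in> R \<longrightarrow> y \<in> X)"
  by auto

lemma Rinv_subset_iff [simp]: "Rinv U R x \<subseteq> X \<longleftrightarrow> (\<forall>y. (y, x) \<in> R \<longrightarrow> y \<in> X)"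
  by auto

lemma mem_lowB [simp]: "x \<in> lowB U R X \<longleftrightarrow> x \<in> U \<and> Rimg U R x \<subseteq> X"
  unfolding lowB_def by blast

lemma mem_upB [simp]: "x \<in> upB U R X \<longleftrightarrow> x \<in> U \<and> (\<exists>y. (x, y) \<in> R \<and> y \<in> X)"
  unfolding upB_def by auto

lemma mem_lowW [simp]: "x \<in> lowW U R X \<longleftrightarrow> x \<in> U \<and> Rinv U R x \<subseteq> X"
  unfolding lowW_def by blast

lemma mem_upW [simp]: "x \<in> upW U R X \<longleftrightarrow> x \<in> U \<and> (\<exists>y. (y, x) \<in> R \<and> y \<in> X)"
  unfolding upW_def by auto

lemma upB_singleton [simp]: "upB U R {z} = {x. (x, z) \<in> R}"
  using R_in_U by auto

abbreviation S where "S \<equiv> singletons U R"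

lemma mem_singletons_iff: "s \<in> S \<longleftrightarrow> s \<in> U \<and> Rimg U R s = {s}"
proof
  assume "s \<in> S"
  then have "s \<in> U" and "card (Rimg U R s) = 1" unfolding singletons_def by auto
  moreover from this(2) obtain a where "Rimg U R s = {a}" by (rule card_1_singletonE)
  moreover have "s \<in> Rimg U R s" using R_refl \<open>s \<in> U\<close> by simp
  ultimately show "s \<in> U \<and> Rimg U R s = {s}" by auto
qed (auto simp: singletons_def)

lemma singleton_R_iff: "s \<in> S \<Longrightarrow> (s, y) \<in> R \<longleftrightarrow> y = s"
  using mem_singletons_iff mem_Rimg by blast

text \<open>Intrinsic descriptions of \<open>\<wp>(U)\<^sup>\<blacktriangledown>\<close> and \<open>\<wp>(U)\<^sup>\<blacktriangle>\<close>: the former are the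
  \<open>\<vartriangle>\<blacktriangledown>\<close>-closed sets, the latter the unions of sets \<open>{w}\<^sup>\<blacktriangle>\<close>.\<close>
definition is_lowB_set :: "'a set \<Rightarrow> bool" where
  "is_lowB_set A \<longleftrightarrow> A \<subseteq> U \<and> lowB U R (upW U R A) \<subseteq> A"

definition is_upB_set :: "'a set \<Rightarrow> bool" where
  "is_upB_set B \<longleftrightarrow> B \<subseteq> U \<and> (\<forall>b\<in>B. \<exists>w. (b, w) \<in> R \<and> upB U R {w} \<subseteq> B)"

lemma is_lowB_set_lowB: "is_lowB_set (lowB U R X)"
  unfolding is_lowB_set_def by (force simp: subset_iff)

lemma is_upB_set_upB: "is_upB_set (upB U R X)"
  unfolding is_upB_set_def
proof (intro conjI ballI)
  fix b assume "b \<in> upB U R X"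
  then obtain y where "(b, y) \<in> R" and "y \<in> X" by auto
  moreover have "upB U R {y} \<subseteq> upB U R X" using \<open>y \<in> X\<close> R_in_U by auto
  ultimately show "\<exists>w. (b, w) \<in> R \<and> upB U R {w} \<subseteq> upB U R X" by blast
qed auto

lemma subset_lowB_upW:
  assumes "X \<subseteq> U"
  shows "X \<subseteq> lowB U R (upW U R X)"
proof
  fix a assume "a \<in> X"
  then have "Rimg U R a \<subseteq> upW U R X" using R_in_U by auto
  then show "a \<in> lowB U R (upW U R X)" using \<open>a \<in> X\<close> assms by auto
qed

lemma lowB_image_eq: "lowB U R ` Pow U = {A. is_lowB_set A}"
proof (intro set_eqI iffI)
  fix A assume "A \<in> lowB U R ` Pow U"
  then show "A \<in> {A. is_lowB_set A}" using is_lowB_set_lowB by blast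
next
  fix A assume "A \<in> {A. is_lowB_set A}"
  then have A: "A \<subseteq> U" "lowB U R (upW U R A) \<subseteq> A" unfolding is_lowB_set_def by auto
  then have "A = lowB U R (upW U R A)" using subset_lowB_upW[OF A(1)] by blast
  moreover have "upW U R A \<in> Pow U" by auto
  ultimately show "A \<in> lowB U R ` Pow U" by blast
qed

lemma upB_image_eq: "upB U R ` Pow U = {B. is_upB_set B}"
proof (intro set_eqI iffI)
  fix B assume "B \<in> upB U R ` Pow U"
  then show "B \<in> {B. is_upB_set B}" using is_upB_set_upB by blast
next
  fix B assume "B \<in> {B. is_upB_set B}"
  then have B: "is_upB_set B" by simp
  have "B \<subseteq> upB U R {w \<in> U. upB U R {w} \<subseteq> B}"
  proof
    fix b assume "b \<in> B"
    then obtain w where "(b, w) \<in> R" and "upB U R {w} \<subseteq> B" using B unfolding is_upB_set_def by blast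
    then show "b \<in> upB U R {w \<in> U. upB U R {w} \<subseteq> B}" using R_in_U by (simp del: upB_singleton) blast
  qed
  moreover have "upB U R {w \<in> U. upB U R {w} \<subseteq> B} \<subseteq> B" by auto
  ultimately have "B = upB U R {w \<in> U. upB U R {w} \<subseteq> B}" by blast
  moreover have "{w \<in> U. upB U R {w} \<subseteq> B} \<in> Pow U" by auto
  ultimately show "B \<in> upB U R ` Pow U" by blast
qed

lemma is_upB_set_Union: "(\<And>B. B \<in> F \<Longrightarrow> is_upB_set B) \<Longrightarrow> is_upB_set (\<Union>F)"
proof -
  assume F: "\<And>B. B \<in> F \<Longrightarrow> is_upB_set B"
  have "\<exists>w. (b, w) \<in> R \<and> upB U R {w} \<subseteq> \<Union>F" if "b \<in> \<Union>F" for b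
  proof -
    from that obtain B where "B \<in> F" and "b \<in> B" by blast
    then obtain w where "(b, w) \<in> R" and "upB U R {w} \<subseteq> B" using F unfolding is_upB_set_def by blast
    then show ?thesis using \<open>B \<in> F\<close> by blast
  qed
  moreover have "\<Union>F \<subseteq> U" using F unfolding is_upB_set_def by blast
  ultimately show ?thesis unfolding is_upB_set_def by blast
qed

lemma mem_DMRS_iff:
  "(A, B) \<in> DMRS U R \<longleftrightarrow>
    is_lowB_set A \<and> is_upB_set B \<and> upB U R (upW U R A) \<subseteq> B \<and> A \<inter> S = B \<inter> S"
  unfolding DMRS_def lowB_image_eq upB_image_eq by auto

lemma mem_DMRS_iff':
  "e \<in> DMRS U R \<longleftrightarrow> is_lowB_set (fst e) \<and> is_upB_set (snd e) \<and>
    upB U R (upW U R (fst e)) \<subseteq> snd e \<and> fst e \<inter> S = snd e \<inter> S"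
  using mem_DMRS_iff[of "fst e" "snd e"] by simp

lemma DMRS_common_successor:
  assumes "(A, B) \<in> DMRS U R" and "a \<in> A" and "(a, w) \<in> R" and "(x, w) \<in> R"
  shows "x \<in> B"
proof -
  have "x \<in> upB U R (upW U R A)" using assms R_in_U by auto
  then show ?thesis using assms(1) unfolding mem_DMRS_iff by blast
qed

lemma DMRS_subset_U: "(A, B) \<in> DMRS U R \<Longrightarrow> A \<subseteq> U \<and> B \<subseteq> U"
  unfolding mem_DMRS_iff is_lowB_set_def is_upB_set_def by blast

lemma DMRS_fst_subset_snd: "(A, B) \<in> DMRS U R \<Longrightarrow> A \<subseteq> B"
proof
  fix a assume "(A, B) \<in> DMRS U R" and "a \<in> A"
  moreover have "a \<in> U" using calculation unfolding mem_DMRS_iff is_lowB_set_def by blast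
  ultimately show "a \<in> B" using DMRS_common_successor[of A B a a a] R_refl by blast
qed

lemma is_lowB_set_Rimg_closed:
  assumes A: "is_lowB_set A" and a: "a \<in> A" and x: "x \<in> U" and sub: "Rimg U R x \<subseteq> Rimg U R a"
  shows "x \<in> A"
proof -
  have "Rimg U R x \<subseteq> upW U R A"
  proof
    fix y assume "y \<in> Rimg U R x"
    then have "(a, y) \<in> R" using sub by auto
    then show "y \<in> upW U R A" using a R_in_U by auto
  qed
  then show ?thesis using A x unfolding is_lowB_set_def by auto
qed

lemma dm_neg_closed:
  assumes e: "e \<in> DMRS U R"
  shows "dm_neg U e \<in> DMRS U R"
proof -
  obtain A B where AB: "e = (A, B)" by (cases e)
  have eAB: "(A, B) \<in> DMRS U R" using e AB by simp
  then have A: "is_lowB_set A" and B: "is_upB_set B" and AS: "A \<inter> S = B \<inter> S"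
    unfolding mem_DMRS_iff by auto
  have "is_lowB_set (U - B)" unfolding is_lowB_set_def
  proof (intro conjI subsetI)
    fix x assume x: "x \<in> lowB U R (upW U R (U - B))"
    show "x \<in> U - B"
    proof (rule ccontr)
      assume "x \<notin> U - B"
      then obtain w where w: "(x, w) \<in> R" "upB U R {w} \<subseteq> B"
        using x B unfolding is_upB_set_def by auto
      have "w \<in> Rimg U R x" using w by simp
      then have "w \<in> upW U R (U - B)" using x by auto
      then obtain a where "(a, w) \<in> R" "a \<in> U - B" by auto
      then show False using w by auto
    qed
  qed auto
  moreover have "is_upB_set (U - A)" unfolding is_upB_set_def
  proof (intro conjI ballI)
    fix b assume b: "b \<in> U - A"
    then have "\<not> Rimg U R b \<subseteq> upW U R A" using A unfolding is_lowB_set_def by auto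
    then obtain w where w: "(b, w) \<in> R" "w \<notin> upW U R A" by auto
    then have "upB U R {w} \<subseteq> U - A" using R_in_U by auto
    then show "\<exists>w. (b, w) \<in> R \<and> upB U R {w} \<subseteq> U - A" using w by blast
  qed auto
  moreover have "upB U R (upW U R (U - B)) \<subseteq> U - A"
  proof
    fix x assume "x \<in> upB U R (upW U R (U - B))"
    then obtain w b where "x \<in> U" "(x, w) \<in> R" "(b, w) \<in> R" "b \<in> U - B" by auto
    then show "x \<in> U - A" using DMRS_common_successor[OF eAB, of x w b] by blast
  qed
  moreover have "(U - B) \<inter> S = (U - A) \<inter> S" using AS by blast
  ultimately show ?thesis unfolding AB dm_neg_def mem_DMRS_iff by simp
qed

lemma dm_neg_dm_neg: "e \<in> DMRS U R \<Longrightarrow> dm_neg U (dm_neg U e) = e"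
  unfolding dm_neg_def using DMRS_subset_U by (cases e) auto

lemma pair_le_dm_neg: "pair_le a b \<Longrightarrow> pair_le (dm_neg U b) (dm_neg U a)"
  unfolding pair_le_def dm_neg_def by auto

lemma upB_lowW_subset: "upB U R (lowW U R Z) \<subseteq> Z"
proof
  fix x assume "x \<in> upB U R (lowW U R Z)"
  then obtain w where "(x, w) \<in> R" "w \<in> lowW U R Z" by auto
  then show "x \<in> Z" by auto
qed

lemma upB_set_subset_upB_lowW:
  assumes D: "is_upB_set D" and DZ: "D \<subseteq> Z"
  shows "D \<subseteq> upB U R (lowW U R Z)"
proof
  fix d assume "d \<in> D"
  then obtain w where w: "(d, w) \<in> R" "upB U R {w} \<subseteq> D" using D unfolding is_upB_set_def by blast
  then have "w \<in> lowW U R Z" using DZ R_in_U by auto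
  then show "d \<in> upB U R (lowW U R Z)" using w R_in_U by auto
qed

text \<open>Joins and meets of \<open>DM(RS)\<close> as described in the paper; the intersections are
  taken inside \<open>U\<close> so that the formula for meets also covers the empty family.\<close>
lemma DMRS_join_mem:
  assumes F: "F \<subseteq> DMRS U R"
  shows "(lowB U R (upW U R (\<Union>(fst ` F))), \<Union>(snd ` F)) \<in> DMRS U R"
proof -
  let ?Y = "\<Union>(fst ` F)"
  let ?A = "lowB U R (upW U R ?Y)"
  let ?B = "\<Union>(snd ` F)"
  have F_mem: "(fst e, snd e) \<in> DMRS U R" if "e \<in> F" for e using F that by auto
  have "?Y \<subseteq> U" using F DMRS_subset_U by fastforce
  then have Y_A: "?Y \<subseteq> ?A" by (rule subset_lowB_upW)
  have "upB U R (upW U R ?A) \<subseteq> ?B"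
  proof
    fix x assume "x \<in> upB U R (upW U R ?A)"
    then obtain w v where xw: "(x, w) \<in> R" and "(v, w) \<in> R" and "v \<in> ?A" by auto
    then have "w \<in> upW U R ?Y" by auto
    then obtain a e where "(a, w) \<in> R" "e \<in> F" "a \<in> fst e" by auto
    then show "x \<in> ?B" using DMRS_common_successor[OF F_mem] xw by blast
  qed
  moreover have "?A \<inter> S = ?B \<inter> S"
  proof (intro set_eqI iffI)
    fix s assume s: "s \<in> ?A \<inter> S"
    then have "s \<in> upW U R ?Y" using R_refl by auto
    then obtain a e where "(a, s) \<in> R" "e \<in> F" "a \<in> fst e" by auto
    then show "s \<in> ?B \<inter> S" using DMRS_common_successor[OF F_mem, of e a s s] s R_refl by auto
  next
    fix s assume s: "s \<in> ?B \<inter> S"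
    then obtain e where "e \<in> F" "s \<in> snd e" by blast
    then have "s \<in> fst e" using F_mem s unfolding mem_DMRS_iff by blast
    then show "s \<in> ?A \<inter> S" using Y_A \<open>e \<in> F\<close> s by blast
  qed
  moreover have "is_upB_set ?B"
    using is_upB_set_Union[of "snd ` F"] F_mem unfolding mem_DMRS_iff by blast
  ultimately show ?thesis unfolding mem_DMRS_iff using is_lowB_set_lowB by blast
qed

lemma is_lub_DMRS:
  assumes F: "F \<subseteq> DMRS U R"
  shows "is_lub (DMRS U R) pair_le F (lowB U R (upW U R (\<Union>(fst ` F))), \<Union>(snd ` F))"
  unfolding is_lub_def
proof (intro conjI ballI impI DMRS_join_mem[OF F])
  have "\<Union>(fst ` F) \<subseteq> U" using F DMRS_subset_U by fastforce
  then show "pair_le e (lowB U R (upW U R (\<Union>(fst ` F))), \<Union>(snd ` F))" if "e \<in> F" for e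
    using that subset_lowB_upW unfolding pair_le_def by auto
next
  fix y assume y: "y \<in> DMRS U R" and upper: "\<forall>e\<in>F. pair_le e y"
  then have "\<Union>(fst ` F) \<subseteq> fst y" "\<Union>(snd ` F) \<subseteq> snd y" unfolding pair_le_def by auto
  then have "lowB U R (upW U R (\<Union>(fst ` F))) \<subseteq> lowB U R (upW U R (fst y))" unfolding lowB_def upW_def by blast
  also have "\<dots> \<subseteq> fst y" using y unfolding mem_DMRS_iff' is_lowB_set_def by blast
  finally show "pair_le (lowB U R (upW U R (\<Union>(fst ` F))), \<Union>(snd ` F)) y"
    unfolding pair_le_def using \<open>\<Union>(snd ` F) \<subseteq> snd y\<close> by simp
qed

lemma DMRS_meet_mem:
  assumes F: "F \<subseteq> DMRS U R"
  shows "(U \<inter> \<Inter>(fst ` F), upB U R (lowW U R (U \<inter> \<Inter>(snd ` F)))) \<in> DMRS U R"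
proof -
  let ?A = "U \<inter> \<Inter>(fst ` F)"
  let ?Z = "U \<inter> \<Inter>(snd ` F)"
  let ?B = "upB U R (lowW U R ?Z)"
  have F_mem: "(fst e, snd e) \<in> DMRS U R" if "e \<in> F" for e using F that by auto
  have "is_lowB_set ?A" unfolding is_lowB_set_def
  proof (intro conjI subsetI)
    fix x assume x: "x \<in> lowB U R (upW U R ?A)"
    have "x \<in> fst e" if e: "e \<in> F" for e
    proof -
      have "x \<in> lowB U R (upW U R (fst e))" using x e by auto
      then show ?thesis using F_mem[OF e] unfolding mem_DMRS_iff is_lowB_set_def by blast
    qed
    then show "x \<in> ?A" using x by auto
  qed auto
  moreover have "upB U R (upW U R ?A) \<subseteq> ?B"
  proof (rule upB_set_subset_upB_lowW[OF is_upB_set_upB], rule subsetI)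
    fix x assume "x \<in> upB U R (upW U R ?A)"
    then obtain w a where "x \<in> U" "(x, w) \<in> R" "(a, w) \<in> R" "a \<in> ?A" by auto
    then show "x \<in> ?Z" using DMRS_common_successor[OF F_mem] by blast
  qed
  moreover have "?A \<inter> S = ?B \<inter> S"
  proof (intro set_eqI iffI)
    fix s assume s: "s \<in> ?A \<inter> S"
    then have "(s, s) \<in> R" using R_refl by auto
    moreover have "s \<in> lowW U R ?Z"
      using s R_in_U DMRS_common_successor[OF F_mem _ \<open>(s, s) \<in> R\<close>] by auto
    ultimately show "s \<in> ?B \<inter> S" using s by auto
  next
    fix s assume s: "s \<in> ?B \<inter> S"
    then have "s \<in> ?Z" using upB_lowW_subset by blast
    then show "s \<in> ?A \<inter> S" using F_mem s unfolding mem_DMRS_iff by blast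
  qed
  ultimately show ?thesis unfolding mem_DMRS_iff using is_upB_set_upB by blast
qed

lemma is_glb_DMRS:
  assumes F: "F \<subseteq> DMRS U R"
  shows "is_glb (DMRS U R) pair_le F (U \<inter> \<Inter>(fst ` F), upB U R (lowW U R (U \<inter> \<Inter>(snd ` F))))"
  unfolding is_glb_def
proof (intro conjI ballI impI DMRS_meet_mem[OF F])
  show "pair_le (U \<inter> \<Inter>(fst ` F), upB U R (lowW U R (U \<inter> \<Inter>(snd ` F)))) e" if "e \<in> F" for e
    using that upB_lowW_subset unfolding pair_le_def by fastforce
next
  fix y assume y: "y \<in> DMRS U R" and lower: "\<forall>e\<in>F. pair_le y e"
  have "fst y \<subseteq> U" "snd y \<subseteq> U" using y DMRS_subset_U[of "fst y" "snd y"] by auto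
  then have "fst y \<subseteq> U \<inter> \<Inter>(fst ` F)" "snd y \<subseteq> U \<inter> \<Inter>(snd ` F)" using lower unfolding pair_le_def by auto
  moreover have "snd y \<subseteq> upB U R (lowW U R (U \<inter> \<Inter>(snd ` F)))"
    using upB_set_subset_upB_lowW y calculation(2) unfolding mem_DMRS_iff' by blast
  ultimately show "pair_le y (U \<inter> \<Inter>(fst ` F), upB U R (lowW U R (U \<inter> \<Inter>(snd ` F))))"
    unfolding pair_le_def by simp
qed

lemma bot_DMRS: "({}, {}) \<in> DMRS U R"
  unfolding mem_DMRS_iff is_lowB_set_def is_upB_set_def by (simp add: set_eq_iff) (meson R_refl)

lemma top_DMRS: "(U, U) \<in> DMRS U R"
  unfolding mem_DMRS_iff is_lowB_set_def is_upB_set_def using R_refl R_in_U by fastforce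

text \<open>Every element of \<open>DM(RS)\<close> is a join of elements of these two kinds, and each
  completely join-irreducible element is one of them.\<close>
definition gen_fst :: "'a \<Rightarrow> 'a set \<times> 'a set" where
  "gen_fst c = (lowB U R (Rimg U R c), upB U R (Rimg U R c))"

definition gen_snd :: "'a \<Rightarrow> 'a set \<times> 'a set" where
  "gen_snd z = (if z \<in> S then {z} else {}, upB U R {z})"

lemma fst_gen_fst: "fst (gen_fst c) = lowB U R (Rimg U R c)"
  and snd_gen_fst: "snd (gen_fst c) = upB U R (Rimg U R c)"
  and fst_gen_snd: "z \<notin> S \<Longrightarrow> fst (gen_snd z) = {}"
  and snd_gen_snd: "snd (gen_snd z) = upB U R {z}"
  unfolding gen_fst_def gen_snd_def by simp_all

lemma gen_fst_mem: "c \<in> U \<Longrightarrow> gen_fst c \<in> DMRS U R"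
  unfolding gen_fst_def mem_DMRS_iff
proof (intro conjI is_lowB_set_lowB is_upB_set_upB)
  show "upB U R (upW U R (lowB U R (Rimg U R c))) \<subseteq> upB U R (Rimg U R c)" by fastforce
  show "lowB U R (Rimg U R c) \<inter> S = upB U R (Rimg U R c) \<inter> S"
    using singleton_R_iff R_refl by (auto simp: mem_singletons_iff)
qed

lemma gen_snd_mem:
  assumes z: "z \<in> U"
  shows "gen_snd z \<in> DMRS U R"
proof (cases "z \<in> S")
  case True
  have "is_lowB_set {z}" unfolding is_lowB_set_def using z singleton_R_iff[OF True] R_refl by auto
  moreover have "upB U R (upW U R {z}) \<subseteq> upB U R {z}" using singleton_R_iff[OF True] by auto
  moreover have "{z} \<inter> S = upB U R {z} \<inter> S" using True R_refl[OF z] singleton_R_iff by auto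
  ultimately have "({z}, upB U R {z}) \<in> DMRS U R" unfolding mem_DMRS_iff using is_upB_set_upB by blast
  then show ?thesis unfolding gen_snd_def using True by simp
next
  case False
  have "is_lowB_set {}" unfolding is_lowB_set_def by (simp add: set_eq_iff) (meson R_refl)
  moreover have "upB U R (upW U R {}) \<subseteq> upB U R {z}" by auto
  moreover have "{} \<inter> S = upB U R {z} \<inter> S" using False singleton_R_iff by auto
  ultimately have "({}, upB U R {z}) \<in> DMRS U R" unfolding mem_DMRS_iff using is_upB_set_upB by blast
  then show ?thesis unfolding gen_snd_def using False by simp
qed

lemma gen_snd_eq_gen_fst: "z \<in> S \<Longrightarrow> gen_snd z = gen_fst z"
  unfolding gen_snd_def gen_fst_def using R_refl by (auto simp: mem_singletons_iff)

lemma gen_fst_le_iff: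
  assumes c: "c \<in> U" and e: "e \<in> DMRS U R"
  shows "pair_le (gen_fst c) e \<longleftrightarrow> c \<in> fst e"
proof
  assume "pair_le (gen_fst c) e"
  then show "c \<in> fst e" unfolding pair_le_def gen_fst_def using c by auto
next
  assume c_in: "c \<in> fst e"
  have "lowB U R (Rimg U R c) \<subseteq> fst e"
    using is_lowB_set_Rimg_closed[OF _ c_in] e unfolding mem_DMRS_iff' by auto
  moreover have "upB U R (Rimg U R c) \<subseteq> snd e"
    using DMRS_common_successor[of "fst e" "snd e" c] e c_in by auto
  ultimately show "pair_le (gen_fst c) e" unfolding pair_le_def gen_fst_def by simp
qed

lemma gen_snd_le_iff:
  assumes z: "z \<in> U" and e: "e \<in> DMRS U R"
  shows "pair_le (gen_snd z) e \<longleftrightarrow> upB U R {z} \<subseteq> snd e"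
proof
  assume "upB U R {z} \<subseteq> snd e"
  moreover have "z \<in> fst e" if "z \<in> S" and "z \<in> snd e"
    using that e unfolding mem_DMRS_iff' by blast
  ultimately show "pair_le (gen_snd z) e" unfolding pair_le_def gen_snd_def using z R_refl by auto
qed (simp add: pair_le_def gen_snd_def)

lemma is_lub_generators:
  assumes e: "e \<in> DMRS U R"
  shows "is_lub (DMRS U R) pair_le
    (gen_fst ` fst e \<union> gen_snd ` {z \<in> U. upB U R {z} \<subseteq> snd e}) e"
  unfolding is_lub_def
proof (intro conjI ballI impI e)
  have eU: "fst e \<subseteq> U" using e DMRS_subset_U[of "fst e" "snd e"] by simp
  fix x assume "x \<in> gen_fst ` fst e \<union> gen_snd ` {z \<in> U. upB U R {z} \<subseteq> snd e}"
  then show "pair_le x e" using gen_fst_le_iff gen_snd_le_iff e eU by blast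
next
  fix y assume y: "y \<in> DMRS U R"
    and upper: "\<forall>x\<in>gen_fst ` fst e \<union> gen_snd ` {z \<in> U. upB U R {z} \<subseteq> snd e}. pair_le x y"
  have "fst e \<subseteq> U" using e DMRS_subset_U[of "fst e" "snd e"] by simp
  then have "fst e \<subseteq> fst y" using upper gen_fst_le_iff[OF _ y] by blast
  moreover have "snd e \<subseteq> snd y"
  proof
    fix b assume "b \<in> snd e"
    then obtain w where w: "(b, w) \<in> R" "upB U R {w} \<subseteq> snd e"
      using e unfolding mem_DMRS_iff' is_upB_set_def by blast
    then have "w \<in> U" using R_in_U by blast
    then have "upB U R {w} \<subseteq> snd y" using upper w(2) gen_snd_le_iff[OF _ y] by blast
    then show "b \<in> snd y" using w(1) by auto
  qed
  ultimately show "pair_le e y" unfolding pair_le_def by simp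
qed

end

section \<open>Join-irreducible elements of \<open>DM(RS)\<close> and the Nelson identity\<close>

locale rough_cd_spatial = refl_rough_space +
  assumes DMRS_completely_distributive: "completely_distributive (DMRS U R) pair_le"
    and DMRS_spatial: "spatial (DMRS U R) pair_le"

sublocale rough_cd_spatial \<subseteq> DM: cd_spatial_de_morgan_lattice "DMRS U R" pair_le "dm_neg U"
proof unfold_locales
  fix a b c :: "'a set \<times> 'a set"
  show "pair_le a a" and "pair_le a b \<Longrightarrow> pair_le b a \<Longrightarrow> a = b"
    and "pair_le a b \<Longrightarrow> pair_le b c \<Longrightarrow> pair_le a c"
    unfolding pair_le_def prod_eq_iff by auto
  fix A assume "A \<subseteq> DMRS U R"
  then show "\<exists>x. is_lub (DMRS U R) pair_le A x" and "\<exists>x. is_glb (DMRS U R) pair_le A x"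
    using is_lub_DMRS is_glb_DMRS by blast+
qed (simp_all add: DMRS_completely_distributive DMRS_spatial dm_neg_closed dm_neg_dm_neg pair_le_dm_neg)

context rough_cd_spatial
begin

abbreviation cji_upB where
  "cji_upB X \<equiv> completely_join_irreducible (upB U R ` Pow U) (\<subseteq>) X"

lemma cji_cases:
  assumes j: "DM.cji j"
  obtains c where "c \<in> U" and "j = gen_fst c"
  | z where "z \<in> U" and "z \<notin> S" and "j = gen_snd z"
proof -
  have jL: "j \<in> DMRS U R" using DM.cji_closed[OF j] .
  let ?G = "gen_fst ` fst j \<union> gen_snd ` {z \<in> U. upB U R {z} \<subseteq> snd j}"
  have "fst j \<subseteq> U" using jL DMRS_subset_U[of "fst j" "snd j"] by simp
  then have "?G \<subseteq> DMRS U R" using gen_fst_mem gen_snd_mem by blast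
  then have "j \<in> ?G" using j is_lub_generators[OF jL] unfolding completely_join_irreducible_def by blast
  then show ?thesis using that \<open>fst j \<subseteq> U\<close> gen_snd_eq_gen_fst by blast
qed

lemma g_gen_fst_le_iff:
  assumes j: "DM.cji (gen_fst c)" and c: "c \<in> U" and e: "e \<in> DMRS U R"
  shows "pair_le (DM.g (gen_fst c)) e \<longleftrightarrow> c \<in> snd e"
  using DM.g_le_iff[OF j e] gen_fst_le_iff[OF c dm_neg_closed[OF e]] c
  by (simp add: dm_neg_def)

lemma g_gen_snd_le_iff:
  assumes j: "DM.cji (gen_snd z)" and z: "z \<in> U" and e: "e \<in> DMRS U R"
  shows "pair_le (DM.g (gen_snd z)) e \<longleftrightarrow> upB U R {z} \<inter> fst e \<noteq> {}"
  using DM.g_le_iff[OF j e] gen_snd_le_iff[OF z dm_neg_closed[OF e]] R_in_U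
  by (auto simp: dm_neg_def)

lemma g_gen_snd:
  assumes j: "DM.cji (gen_snd y)" and y: "y \<in> U" and yS: "y \<notin> S"
  obtains b where "(b, y) \<in> R" and "DM.g (gen_snd y) = gen_fst b"
    and "\<And>t. (t, y) \<in> R \<Longrightarrow> Rimg U R b \<subseteq> Rimg U R t"
proof -
  have g_le_iff: "pair_le (DM.g (gen_snd y)) e \<longleftrightarrow> upB U R {y} \<inter> fst e \<noteq> {}"
    if "e \<in> DMRS U R" for e
    using g_gen_snd_le_iff[OF j y that] .
  have g_mem: "DM.g (gen_snd y) \<in> DMRS U R" using DM.g_closed .
  obtain c where c: "c \<in> U" "DM.g (gen_snd y) = gen_fst c"
  proof (rule cji_cases[OF DM.cji_g[OF j]])
    fix w assume w: "w \<in> U" "w \<notin> S" "DM.g (gen_snd y) = gen_snd w"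
    then have "upB U R {y} \<inter> fst (gen_snd w) \<noteq> {}"
      using g_le_iff[OF gen_snd_mem[OF w(1)]] DM.le_refl[OF g_mem] by simp
    then show ?thesis using fst_gen_snd[OF w(2)] by simp
  qed
  have c_min: "Rimg U R c \<subseteq> Rimg U R t" if ty: "(t, y) \<in> R" for t
  proof -
    have t: "t \<in> U" using ty R_in_U by blast
    have "t \<in> upB U R {y} \<inter> fst (gen_fst t)" using ty t by (auto simp: fst_gen_fst)
    then have "pair_le (DM.g (gen_snd y)) (gen_fst t)" using g_le_iff[OF gen_fst_mem[OF t]] by blast
    then have "pair_le (gen_fst c) (gen_fst t)" using c(2) by simp
    then show ?thesis using gen_fst_le_iff[OF c(1) gen_fst_mem[OF t]] c(1) by (simp add: fst_gen_fst)
  qed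
  have "upB U R {y} \<inter> fst (gen_fst c) \<noteq> {}"
    using g_le_iff[OF gen_fst_mem[OF c(1)]] DM.le_refl[OF g_mem] c(2) by simp
  then obtain b where b: "(b, y) \<in> R" "Rimg U R b \<subseteq> Rimg U R c"
    unfolding fst_gen_fst by (auto simp del: Rimg_subset_iff)
  have same_Rimg: "Rimg U R b = Rimg U R c" using b(2) c_min[OF b(1)] by (rule equalityI)
  show ?thesis
  proof (rule that[OF b(1)])
    show "DM.g (gen_snd y) = gen_fst b" unfolding c(2) gen_fst_def same_Rimg ..
    show "Rimg U R b \<subseteq> Rimg U R t" if "(t, y) \<in> R" for t
      unfolding same_Rimg using c_min[OF that] .
  qed
qed

lemma g_gen_fst:
  assumes j: "DM.cji (gen_fst c)" and c: "c \<in> U"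
  obtains w where "(c, w) \<in> R" and "DM.g (gen_fst c) = gen_snd w"
proof -
  let ?g = "DM.g (gen_fst c)"
  have g_mem: "?g \<in> DMRS U R" using DM.g_closed .
  have "c \<in> snd ?g" using g_gen_fst_le_iff[OF j c g_mem] DM.le_refl[OF g_mem] by blast
  then obtain w where w: "(c, w) \<in> R" "upB U R {w} \<subseteq> snd ?g"
    using g_mem unfolding mem_DMRS_iff' is_upB_set_def by blast
  have w_U: "w \<in> U" using w R_in_U by blast
  have "pair_le (gen_snd w) ?g" using gen_snd_le_iff[OF w_U g_mem] w(2) by blast
  moreover have "pair_le ?g (gen_snd w)"
    using g_gen_fst_le_iff[OF j c gen_snd_mem[OF w_U]] w(1) by (simp add: snd_gen_snd)
  ultimately have "?g = gen_snd w" using DM.le_antisym[OF g_mem gen_snd_mem[OF w_U]] by blast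
  with w(1) show ?thesis by (rule that)
qed

lemma g_gen_fst_le_gen_fst:
  assumes "DM.cji (gen_fst c)" and "c \<in> U"
  shows "pair_le (DM.g (gen_fst c)) (gen_fst c)"
  using g_gen_fst_le_iff[OF assms gen_fst_mem[OF assms(2)]] assms(2) R_refl
  by (auto simp: snd_gen_fst)

lemma is_lub_upB_image:
  assumes "F \<subseteq> upB U R ` Pow U"
  shows "is_lub (upB U R ` Pow U) (\<subseteq>) F (\<Union>F)"
proof -
  have "\<Union>F \<in> upB U R ` Pow U"
    using is_upB_set_Union[of F] assms unfolding upB_image_eq by blast
  then show ?thesis unfolding is_lub_def by blast
qed

lemma cji_gen_snd_if_cji_upB:
  assumes z: "z \<in> U" and cji: "cji_upB (upB U R {z})"
  shows "DM.cji (gen_snd z)"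
  unfolding completely_join_irreducible_def
proof (intro conjI allI impI gen_snd_mem[OF z])
  fix G assume G: "G \<subseteq> DMRS U R" and lub: "is_lub (DMRS U R) pair_le G (gen_snd z)"
  have "gen_snd z = (lowB U R (upW U R (\<Union>(fst ` G))), \<Union>(snd ` G))"
    using DM.is_lub_unique[OF lub is_lub_DMRS[OF G]] .
  then have "upB U R {z} = \<Union>(snd ` G)" by (simp add: gen_snd_def del: upB_singleton)
  moreover have snd_G: "snd ` G \<subseteq> upB U R ` Pow U"
    using G mem_DMRS_iff' unfolding upB_image_eq by blast
  ultimately have "is_lub (upB U R ` Pow U) (\<subseteq>) (snd ` G) (upB U R {z})"
    using is_lub_upB_image[OF snd_G] by (simp only:)
  then have "upB U R {z} \<in> snd ` G" using cji snd_G unfolding completely_join_irreducible_def by blast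
  then obtain t where t: "t \<in> G" "snd t = upB U R {z}" by blast
  have t_mem: "t \<in> DMRS U R" using t G by blast
  have "pair_le (gen_snd z) t" using gen_snd_le_iff[OF z t_mem] t(2) by simp
  moreover have "pair_le t (gen_snd z)" using lub t(1) unfolding is_lub_def by blast
  ultimately have "t = gen_snd z" using DM.le_antisym[OF t_mem gen_snd_mem[OF z]] by blast
  then show "gen_snd z \<in> G" using t(1) by simp
qed

lemma cji_upB_if_cji_gen_snd:
  assumes z: "z \<in> U" and cji: "DM.cji (gen_snd z)"
  shows "cji_upB (upB U R {z})"
  unfolding completely_join_irreducible_def
proof (intro conjI allI impI)
  show "upB U R {z} \<in> upB U R ` Pow U" using z by (intro image_eqI[of _ _ "{z}"]) auto
  fix F assume F: "F \<subseteq> upB U R ` Pow U" and lub: "is_lub (upB U R ` Pow U) (\<subseteq>) F (upB U R {z})"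
  have Union_F: "\<Union>F = upB U R {z}"
    using is_lub_upB_image[OF F] lub unfolding is_lub_def by blast
  have F_upB: "is_upB_set B" if "B \<in> F" for B using F that unfolding upB_image_eq by blast
  show "upB U R {z} \<in> F"
  proof (cases "z \<in> S")
    case True
    then obtain B where B: "B \<in> F" "z \<in> B" using Union_F z R_refl by auto
    then obtain w where "(z, w) \<in> R" "upB U R {w} \<subseteq> B" using F_upB unfolding is_upB_set_def by blast
    then have "w = z" using singleton_R_iff[OF True] by blast
    then have "B = upB U R {z}" using \<open>upB U R {w} \<subseteq> B\<close> B Union_F by blast
    then show ?thesis using B(1) by simp
  next
    case False
    let ?G = "(\<lambda>B. ({}, B)) ` F"
    have "({}, B) \<in> DMRS U R" if "B \<in> F" for B
    proof -
      have "B \<inter> S \<subseteq> upB U R {z} \<inter> S" using that Union_F by blast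
      also have "\<dots> = {}" using False singleton_R_iff by auto
      finally show ?thesis
        using bot_DMRS F_upB[OF that] unfolding mem_DMRS_iff by auto
    qed
    then have G: "?G \<subseteq> DMRS U R" by blast
    have "lowB U R (upW U R {}) = {}" using bot_DMRS unfolding mem_DMRS_iff is_lowB_set_def by blast
    then have "gen_snd z = (lowB U R (upW U R (\<Union>(fst ` ?G))), \<Union>(snd ` ?G))"
      using False Union_F by (simp add: gen_snd_def image_image del: upB_singleton)
    then have "is_lub (DMRS U R) pair_le ?G (gen_snd z)" using is_lub_DMRS[OF G] by simp
    then have "gen_snd z \<in> ?G" using cji G unfolding completely_join_irreducible_def by blast
    then show ?thesis using False by (auto simp: gen_snd_def simp del: upB_singleton)
  qed
qed

lemma cji_gen_snd_iff: "z \<in> U \<Longrightarrow> DM.cji (gen_snd z) \<longleftrightarrow> cji_upB (upB U R {z})"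
  using cji_gen_snd_if_cji_upB cji_upB_if_cji_gen_snd by blast

definition cji_upper_bound_property :: bool where
  "cji_upper_bound_property \<longleftrightarrow>
    (\<forall>x \<in> U - S. \<forall>y \<in> U - S. cji_upB (upB U R {x}) \<longrightarrow> cji_upB (upB U R {y}) \<longrightarrow>
       (\<exists>u \<in> U. upB U R {x} \<subseteq> upB U R {u} \<and> upB U R {y} \<subseteq> upB U R {u}) \<longrightarrow>
       (\<exists>z \<in> U. cji_upB (upB U R {z}) \<and> upB U R {x} \<subseteq> upB U R {z} \<and> upB U R {y} \<subseteq> upB U R {z}))"

lemma upB_subset_if_least_pred:
  assumes "\<And>t. (t, y) \<in> R \<Longrightarrow> Rimg U R b \<subseteq> Rimg U R t" and "(b, w) \<in> R"
  shows "upB U R {y} \<subseteq> upB U R {w}"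
  using assms by auto

lemma gen_snd_le_gen_snd:
  "y \<in> U \<Longrightarrow> z \<in> U \<Longrightarrow> upB U R {y} \<subseteq> upB U R {z} \<Longrightarrow> pair_le (gen_snd y) (gen_snd z)"
  using gen_snd_le_iff[OF _ gen_snd_mem] by (simp add: snd_gen_snd del: upB_singleton)

lemma gen_snd_le_gen_fst: "(c, z) \<in> R \<Longrightarrow> pair_le (gen_snd z) (gen_fst c)"
  using gen_snd_le_iff[OF _ gen_fst_mem] R_in_U by (fastforce simp: snd_gen_fst)

lemma nelson_witness_gen_snd:
  assumes bound: cji_upper_bound_property
    and y: "y \<in> U" "y \<notin> S" "DM.cji (gen_snd y)" and w: "w \<in> U" "w \<notin> S" "DM.cji (gen_snd w)"
    and b: "(b, y) \<in> R" "DM.g (gen_snd y) = gen_fst b" "\<And>t. (t, y) \<in> R \<Longrightarrow> Rimg U R b \<subseteq> Rimg U R t"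
    and c: "(c, w) \<in> R" "DM.g (gen_snd w) = gen_fst c" "\<And>t. (t, w) \<in> R \<Longrightarrow> Rimg U R c \<subseteq> Rimg U R t"
    and yc: "pair_le (gen_snd y) (gen_fst c)"
  shows "\<exists>n. DM.nelson_witness (gen_snd y) (gen_fst c) n"
proof -
  have "c \<in> U" using c(1) R_in_U by blast
  then have "upB U R {y} \<subseteq> upB U R (Rimg U R c)"
    using yc gen_snd_le_iff[OF y(1) gen_fst_mem] by (simp add: snd_gen_fst del: upB_singleton)
  then have "b \<in> upB U R (Rimg U R c)" using b(1) R_in_U by auto
  then obtain u where u: "(b, u) \<in> R" "(c, u) \<in> R" by auto
  then have "u \<in> U" "upB U R {y} \<subseteq> upB U R {u}" "upB U R {w} \<subseteq> upB U R {u}"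
    using R_in_U upB_subset_if_least_pred[OF b(3)] upB_subset_if_least_pred[OF c(3)] by blast+
  moreover have "cji_upB (upB U R {y})" "cji_upB (upB U R {w})"
    using cji_gen_snd_iff y(1,3) w(1,3) by blast+
  ultimately obtain z where z: "z \<in> U" "cji_upB (upB U R {z})"
      "upB U R {y} \<subseteq> upB U R {z}" "upB U R {w} \<subseteq> upB U R {z}"
    using bound[unfolded cji_upper_bound_property_def, rule_format, of y w] y(1,2) w(1,2) by blast
  have z_cji: "DM.cji (gen_snd z)" using cji_gen_snd_iff[OF z(1)] z(2) by blast
  have bz: "(b, z) \<in> R" and cz: "(c, z) \<in> R" using z(3,4) b(1) c(1) by auto
  have "pair_le (DM.g (gen_snd z)) (gen_fst c)"
    using g_gen_snd_le_iff[OF z_cji z(1) gen_fst_mem] cz R_in_U by (auto simp: fst_gen_fst)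
  moreover have c_cji: "DM.cji (gen_fst c)" using DM.cji_g[OF w(3)] c(2) by simp
  ultimately have "DM.nelson_witness (gen_snd y) (gen_fst c) (gen_snd z)"
    unfolding DM.nelson_witness_iff[OF y(3) c_cji z_cji]
    using gen_snd_le_gen_snd[OF y(1) z(1,3)] gen_snd_le_gen_fst[OF cz] gen_snd_le_gen_fst[OF bz] b(2)
    by simp
  then show ?thesis ..
qed

lemma nelson_condition_if_cji_upper_bound_property:
  assumes bound: cji_upper_bound_property
  shows DM.nelson_condition
  unfolding DM.nelson_condition_def
proof (intro allI impI)
  fix m k assume m: "DM.cji m" and k: "DM.cji k" and mk: "pair_le m k"
  show "\<exists>n. DM.nelson_witness m k n"
  proof (cases rule: cji_cases[OF m])
    case (1 c)
    then show ?thesis using DM.nelson_witness_self[OF m k mk] g_gen_fst_le_gen_fst m by blast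
  next
    case m_gen: (2 y)
    have y_cji: "DM.cji (gen_snd y)" using m m_gen(3) by simp
    obtain b where b: "(b, y) \<in> R" "DM.g (gen_snd y) = gen_fst b"
        "\<And>t. (t, y) \<in> R \<Longrightarrow> Rimg U R b \<subseteq> Rimg U R t"
      using g_gen_snd[OF y_cji m_gen(1,2)] by blast
    show ?thesis
    proof (cases rule: cji_cases[OF DM.cji_g[OF k]])
      case (1 d)
      then have "pair_le (DM.g (DM.g k)) (DM.g k)"
        using g_gen_fst_le_gen_fst DM.cji_g[OF k] by simp
      then have "pair_le k (DM.g k)" using DM.g_g[OF k] by simp
      then show ?thesis using DM.nelson_witness_upper[OF m k mk] by blast
    next
      case (2 w)
      have w_cji: "DM.cji (gen_snd w)" using DM.cji_g[OF k] 2(3) by simp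
      obtain c where c: "(c, w) \<in> R" "DM.g (gen_snd w) = gen_fst c"
          "\<And>t. (t, w) \<in> R \<Longrightarrow> Rimg U R c \<subseteq> Rimg U R t"
        using g_gen_snd[OF w_cji 2(1,2)] by blast
      have "k = gen_fst c" using DM.g_g[OF k] 2(3) c(2) by simp
      then show ?thesis
        using nelson_witness_gen_snd[OF bound m_gen(1,2) y_cji 2(1,2) w_cji b c] mk m_gen(3) by simp
    qed
  qed
qed

lemma gen_fst_not_le_gen_snd: "c \<in> U \<Longrightarrow> z \<in> U \<Longrightarrow> z \<notin> S \<Longrightarrow> \<not> pair_le (gen_fst c) (gen_snd z)"
  using gen_fst_le_iff[OF _ gen_snd_mem] fst_gen_snd by simp

lemma cji_bound_of_nelson_witness:
  assumes x: "x \<in> U" "x \<notin> S" "DM.cji (gen_snd x)" and y: "y \<in> U" "y \<notin> S" and b: "b \<in> U"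
    and n: "DM.cji n" "pair_le (gen_snd x) n" "pair_le n (gen_fst b)"
      "pair_le n (gen_snd x) \<or> pair_le n (DM.g (gen_snd x))"
      "pair_le (DM.g n) (gen_fst b) \<or> pair_le (DM.g n) (gen_snd y)"
  obtains w a where "w \<in> U" "DM.cji (gen_snd w)" "upB U R {x} \<subseteq> upB U R {w}"
    "(a, w) \<in> R" "Rimg U R a \<subseteq> Rimg U R b"
proof (cases rule: cji_cases[OF n(1)])
  case (1 c)
  have n_cji: "DM.cji (gen_fst c)" using n(1) 1(2) by simp
  have "\<not> pair_le (gen_fst c) (gen_snd x)" using gen_fst_not_le_gen_snd[OF 1(1) x(1,2)] .
  then have "pair_le (gen_fst c) (DM.g (gen_snd x))" using n(4) 1(2) by simp
  then have x_le: "pair_le (gen_snd x) (DM.g (gen_fst c))" using DM.le_g_iff_le_g[OF n_cji x(3)] by simp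
  obtain w where w: "(c, w) \<in> R" "DM.g (gen_fst c) = gen_snd w" using g_gen_fst[OF n_cji 1(1)] by blast
  have wU: "w \<in> U" using w(1) R_in_U by blast
  show ?thesis
  proof (rule that[OF wU _ _ w(1)])
    show "DM.cji (gen_snd w)" using DM.cji_g[OF n_cji] w(2) by simp
    show "upB U R {x} \<subseteq> upB U R {w}"
      using x_le w(2) gen_snd_le_iff[OF x(1) gen_snd_mem[OF wU]] by (simp add: snd_gen_snd del: upB_singleton)
    have "c \<in> fst (gen_fst b)" using n(3) 1(2) gen_fst_le_iff[OF 1(1) gen_fst_mem[OF b]] by simp
    then show "Rimg U R c \<subseteq> Rimg U R b" by (simp add: fst_gen_fst del: Rimg_subset_iff)
  qed
next
  case (2 w)
  have n_cji: "DM.cji (gen_snd w)" using n(1) 2(3) by simp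
  obtain a where a: "DM.g (gen_snd w) = gen_fst a" "(a, w) \<in> R"
    using g_gen_snd[OF n_cji 2(1,2)] by blast
  have "a \<in> U" using a(2) R_in_U by blast
  then have "\<not> pair_le (DM.g (gen_snd w)) (gen_snd y)" using gen_fst_not_le_gen_snd[OF _ y] a(1) by simp
  then have "pair_le (DM.g (gen_snd w)) (gen_fst b)" using n(5) 2(3) by simp
  then have "upB U R {w} \<inter> fst (gen_fst b) \<noteq> {}" using g_gen_snd_le_iff[OF n_cji 2(1) gen_fst_mem[OF b]] by simp
  then obtain a' where "(a', w) \<in> R" "Rimg U R a' \<subseteq> Rimg U R b"
    by (auto simp: fst_gen_fst simp del: Rimg_subset_iff)
  moreover have "upB U R {x} \<subseteq> upB U R {w}"
    using n(2) 2(3) gen_snd_le_iff[OF x(1) gen_snd_mem[OF 2(1)]] by (simp add: snd_gen_snd del: upB_singleton)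
  ultimately show ?thesis using that[OF 2(1) n_cji] by blast
qed

lemma cji_upper_bound_property_if_nelson_condition:
  assumes cond: DM.nelson_condition
  shows cji_upper_bound_property
  unfolding cji_upper_bound_property_def
proof (intro ballI impI)
  fix x y assume x: "x \<in> U - S" and y: "y \<in> U - S"
    and x_cji: "cji_upB (upB U R {x})" and y_cji: "cji_upB (upB U R {y})"
    and "\<exists>u\<in>U. upB U R {x} \<subseteq> upB U R {u} \<and> upB U R {y} \<subseteq> upB U R {u}"
  then obtain u where xu: "upB U R {x} \<subseteq> upB U R {u}" and yu: "upB U R {y} \<subseteq> upB U R {u}" by blast
  have xU: "x \<in> U" "x \<notin> S" and yU: "y \<in> U" "y \<notin> S" using x y by auto
  have x_cji': "DM.cji (gen_snd x)" using cji_gen_snd_iff[OF xU(1)] x_cji by blast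
  have y_cji': "DM.cji (gen_snd y)" using cji_gen_snd_iff[OF yU(1)] y_cji by blast
  obtain b where b: "(b, y) \<in> R" "DM.g (gen_snd y) = gen_fst b"
      "\<And>t. (t, y) \<in> R \<Longrightarrow> Rimg U R b \<subseteq> Rimg U R t"
    using g_gen_snd[OF y_cji' yU] by blast
  have b_cji: "DM.cji (gen_fst b)" using DM.cji_g[OF y_cji'] b(2) by simp
  have bU: "b \<in> U" using b(1) R_in_U by blast
  have "(b, u) \<in> R" using yu b(1) by auto
  then have "upB U R {x} \<subseteq> snd (gen_fst b)" using xu R_in_U by (fastforce simp: snd_gen_fst)
  then have "pair_le (gen_snd x) (gen_fst b)"
    using gen_snd_le_iff[OF xU(1) gen_fst_mem[OF bU]] by (simp del: upB_singleton)
  then obtain n where "DM.nelson_witness (gen_snd x) (gen_fst b) n"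
    using cond x_cji' b_cji unfolding DM.nelson_condition_def by blast
  moreover have n_cji: "DM.cji n" using calculation unfolding DM.nelson_witness_def by blast
  moreover have "DM.g (gen_fst b) = gen_snd y" using DM.g_g[OF y_cji'] b(2) by simp
  ultimately have n: "pair_le (gen_snd x) n" "pair_le n (gen_fst b)"
      "pair_le n (gen_snd x) \<or> pair_le n (DM.g (gen_snd x))"
      "pair_le (DM.g n) (gen_fst b) \<or> pair_le (DM.g n) (gen_snd y)"
    using DM.nelson_witness_iff[OF x_cji' b_cji n_cji] by simp_all
  obtain w a where w: "w \<in> U" "DM.cji (gen_snd w)" "upB U R {x} \<subseteq> upB U R {w}"
      "(a, w) \<in> R" "Rimg U R a \<subseteq> Rimg U R b"
    using cji_bound_of_nelson_witness[OF xU x_cji' yU bU n_cji n] by blast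
  have "upB U R {y} \<subseteq> upB U R {w}" using upB_subset_if_least_pred[OF b(3)] w(4,5) by auto
  then show "\<exists>z\<in>U. cji_upB (upB U R {z}) \<and> upB U R {x} \<subseteq> upB U R {z} \<and> upB U R {y} \<subseteq> upB U R {z}"
    using w cji_gen_snd_iff by blast
qed

lemma kleene_algebra_DMRS: "kleene_algebra (DMRS U R) pair_le (dm_neg U) ({}, {}) (U, U)"
proof (rule DM.kleene_algebraI[OF bot_DMRS top_DMRS])
  show "\<forall>a\<in>DMRS U R. pair_le ({}, {}) a \<and> pair_le a (U, U)"
    using DMRS_subset_U unfolding pair_le_def by force
  show "\<forall>a\<in>DMRS U R. \<forall>b\<in>DMRS U R.
    pair_le (lmeet (DMRS U R) pair_le a (dm_neg U a)) (ljoin (DMRS U R) pair_le b (dm_neg U b))"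
  proof (intro ballI)
    fix a b assume a: "a \<in> DMRS U R" and b: "b \<in> DMRS U R"
    let ?m = "lmeet (DMRS U R) pair_le a (dm_neg U a)"
    let ?j = "ljoin (DMRS U R) pair_le b (dm_neg U b)"
    have "pair_le ?m a" "pair_le ?m (dm_neg U a)"
      using DM.meet_lower1 DM.meet_lower2 a dm_neg_closed by blast+
    then have "fst ?m \<subseteq> fst a - snd a" unfolding pair_le_def dm_neg_def by auto
    then have "fst ?m = {}" using DMRS_fst_subset_snd[of "fst a" "snd a"] a by auto
    moreover have "pair_le b ?j" "pair_le (dm_neg U b) ?j"
      using DM.join_upper1 DM.join_upper2 b dm_neg_closed by blast+
    then have "U \<subseteq> snd ?j"
      using DMRS_fst_subset_snd[of "fst b" "snd b"] b unfolding pair_le_def dm_neg_def by auto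
    moreover have "snd ?m \<subseteq> U"
      using DMRS_subset_U[of "fst ?m" "snd ?m"] DM.meet_closed a dm_neg_closed by auto
    ultimately show "pair_le ?m ?j" unfolding pair_le_def by auto
  qed
qed

lemma nelson_algebra_DMRS_iff:
  "nelson_algebra (DMRS U R) pair_le (dm_neg U) ({}, {}) (U, U) \<longleftrightarrow> cji_upper_bound_property"
  using DM.nelson_algebra_iff[OF kleene_algebra_DMRS] nelson_condition_if_cji_upper_bound_property
    cji_upper_bound_property_if_nelson_condition by blast

end

theorem mainTheorem1:
  fixes U :: "'a set" and R :: "('a \<times> 'a) set"
  assumes "R \<subseteq> U \<times> U"
    and "refl_on U R"
    and "completely_distributive (DMRS U R) pair_le"
    and "spatial (DMRS U R) pair_le"
  shows "nelson_algebra (DMRS U R) pair_le (dm_neg U) ({}, {}) (U, U) \<longleftrightarrow>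
    (\<forall>x \<in> U - singletons U R. \<forall>y \<in> U - singletons U R.
       completely_join_irreducible (upB U R ` Pow U) (\<subseteq>) (upB U R {x}) \<longrightarrow>
       completely_join_irreducible (upB U R ` Pow U) (\<subseteq>) (upB U R {y}) \<longrightarrow>
       (\<exists>u \<in> U. upB U R {x} \<subseteq> upB U R {u} \<and> upB U R {y} \<subseteq> upB U R {u}) \<longrightarrow>
       (\<exists>z \<in> U. completely_join_irreducible (upB U R ` Pow U) (\<subseteq>) (upB U R {z}) \<and>
          upB U R {x} \<subseteq> upB U R {z} \<and> upB U R {y} \<subseteq> upB U R {z}))"
proof -
  interpret rough_cd_spatial U R
    using assms by unfold_locales
  show ?thesis using nelson_algebra_DMRS_iff unfolding cji_upper_bound_property_def .
qed

end
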